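(* Let $k\ge0$, $c>0$, and for each $n$ let $X_n$ be a homogeneous and spatially independent random subcomplex of $\triangle_n$ with $n^{k+1}q_k\to\infty$ and $nr_k\sim c$. Then for every $\varepsilon>0$, \[ \lim_{n\to\infty}\mathbb{P}\left(\frac{\beta_k(X_n)}{f_k(X_n)}<1-\frac{c}{k+2}-\varepsilon\ \Big|\ \dim X_n\ge k\right)=0 . \]
   Context: Homogeneous (law invariant under permutations of $[n]$) and spatially independent ($\mathbb{P}(Y_1\cup Y_2\subset X)\mathbb{P}(Y_1\cap Y_2\subset X)=\mathbb{P}(Y_1\subset X)\mathbb{P}(Y_2\subset X)$ for all subcomplexes) random subcomplexes of $\triangle_n=2^{[n]}$; $q_k=\mathbb{P}(\tau\in X_n)$ for a $k$-simplex $\tau$, $r_k=\mathbb{P}(\sigma\in X_n\mid\tau\in X_n)$ for $\tau\subset\sigma$ a $(k+1)$-simplex. $f_k$ is the number of $k$-simplices and $\beta_k$ the $k$th reduced real Betti number. *)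

theory Defs
  imports "HOL-Probability.Probability" "HOL-Library.Function_Algebras"
begin

(* Vertex set [n] = {0..<n}; the full simplex \<triangle>_n = 2^[n] (including the empty face). *)

definition is_subcomplex :: "nat \<Rightarrow> nat set set \<Rightarrow> bool" where
  "is_subcomplex n Y \<longleftrightarrow> Y \<subseteq> Pow {0..<n} \<and> (\<forall>\<sigma>\<in>Y. \<forall>\<tau>. \<tau> \<subseteq> \<sigma> \<longrightarrow> \<tau> \<in> Y)"

definition fnum :: "nat \<Rightarrow> nat set set \<Rightarrow> nat" where
  "fnum k Y = card {\<sigma>\<in>Y. card \<sigma> = k + 1}"

definition dim_ge :: "nat set set \<Rightarrow> nat \<Rightarrow> bool" where
  "dim_ge Y k \<longleftrightarrow> (\<exists>\<sigma>\<in>Y. k + 1 \<le> card \<sigma>)"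

definition cscale :: "real \<Rightarrow> (nat set \<Rightarrow> real) \<Rightarrow> (nat set \<Rightarrow> real)" where
  "cscale a f = (\<lambda>x. a * f x)"

definition chains :: "nat set set \<Rightarrow> nat \<Rightarrow> (nat set \<Rightarrow> real) set" where
  "chains Y k = {c. \<forall>\<sigma>. c \<sigma> \<noteq> 0 \<longrightarrow> \<sigma> \<in> Y \<and> card \<sigma> = k + 1}"

(* simplicial (augmented) boundary map \<partial>_k : C_k \<rightarrow> C_{k-1}, vertices ordered by <;
   the sign of the face \<sigma> - {v} in \<partial>\<sigma> is (-1)^(#vertices of \<sigma> below v).
   For k = 0 the target is C_{-1} = functions on the empty face, giving reduced homology. *)
definition bdry :: "nat set set \<Rightarrow> nat \<Rightarrow> (nat set \<Rightarrow> real) \<Rightarrow> (nat set \<Rightarrow> real)" where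
  "bdry Y k c = (\<lambda>\<tau>. if \<tau> \<in> Y \<and> card \<tau> = k then
      (\<Sum>v\<in>{v. v \<notin> \<tau> \<and> insert v \<tau> \<in> Y}. (-1) ^ card {u\<in>\<tau>. u < v} * c (insert v \<tau>))
    else 0)"

definition betti :: "nat \<Rightarrow> nat set set \<Rightarrow> nat" where
  "betti k Y = vector_space.dim cscale {c \<in> chains Y k. bdry Y k c = 0}
             - vector_space.dim cscale (bdry Y (k + 1) ` chains Y (k + 1))"

definition homogeneous :: "nat \<Rightarrow> nat set set pmf \<Rightarrow> bool" where
  "homogeneous n X \<longleftrightarrow> (\<forall>\<pi>. \<pi> permutes {0..<n} \<longrightarrow> map_pmf (\<lambda>Y. (\<lambda>\<sigma>. \<pi> ` \<sigma>) ` Y) X = X)"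

definition spatially_independent :: "nat \<Rightarrow> nat set set pmf \<Rightarrow> bool" where
  "spatially_independent n X \<longleftrightarrow> (\<forall>Y1 Y2. is_subcomplex n Y1 \<longrightarrow> is_subcomplex n Y2 \<longrightarrow>
     measure_pmf.prob X {Z. Y1 \<union> Y2 \<subseteq> Z} * measure_pmf.prob X {Z. Y1 \<inter> Y2 \<subseteq> Z}
     = measure_pmf.prob X {Z. Y1 \<subseteq> Z} * measure_pmf.prob X {Z. Y2 \<subseteq> Z})"

(* q_k = P(\<tau> \<in> X) for the k-simplex \<tau> = {0,...,k} (independent of \<tau> by homogeneity) *)
definition qprob :: "nat set set pmf \<Rightarrow> nat \<Rightarrow> real" where
  "qprob X k = measure_pmf.prob X {Z. {0..<k+1} \<in> Z}"

definition rprob :: "nat set set pmf \<Rightarrow> nat \<Rightarrow> real" where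
  "rprob X k = measure_pmf.prob X {Z. {0..<k+2} \<in> Z \<and> {0..<k+1} \<in> Z}
             / measure_pmf.prob X {Z. {0..<k+1} \<in> Z}"

end

theory Submission
  imports Defs
begin

text \<open>Let \<open>Q j\<close> be the probability that a fixed face with \<open>j\<close> vertices lies in \<open>X\<close>, so that
  \<open>Q 0 = P(X \<noteq> {})\<close>, and let \<open>f i\<close> count the \<open>i\<close>-simplices of \<open>X\<close>. Rank-nullity gives
  \<open>\<beta> k \<ge> f k - f (k-1) - f (k+1)\<close>. Homogeneity and spatial independence give
  \<open>P(\<sigma> \<in> X \<and> \<tau> \<in> X) = Q |\<sigma>| * Q |\<tau>| / Q |\<sigma> \<inter> \<tau>|\<close>, which makes \<open>Q\<close> log-concave, together with
  a third-order companion inequality. With \<open>n^(k+1) Q (k+1) \<rightarrow> \<infinity>\<close> and \<open>n Q (k+2) / Q (k+1) \<rightarrow> c\<close>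
  this forces \<open>n^i Q i / Q 0 \<rightarrow> \<infinity>\<close> for \<open>1 \<le> i \<le> k+2\<close> and \<open>n Q (k+1) / Q k \<rightarrow> \<infinity>\<close>. Conditionally
  on \<open>X \<noteq> {}\<close>, a second moment computation then concentrates \<open>f k\<close> and \<open>f (k+1)\<close> around their
  means, whose ratio is asymptotically at most \<open>c/(k+2)\<close>, while Markov's inequality makes
  \<open>f (k-1)\<close> negligible compared with \<open>f k\<close>.\<close>

section \<open>Betti numbers and face counts\<close>

lemma (in vector_space) dim_le_dim_kernel_add_card:
  assumes S: "subspace S" "S \<subseteq> span V" "finite V" and "Vector_Spaces.linear scale scale f"
    and W: "f ` S \<subseteq> span W" "finite W"
  shows "dim S \<le> dim {x\<in>S. f x = 0} + card W"
proof -
  interpret L: Vector_Spaces.linear scale scale f by fact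
  obtain K where K: "K \<subseteq> {x\<in>S. f x = 0}" "independent K" "{x\<in>S. f x = 0} \<subseteq> span K"
      "card K = dim {x\<in>S. f x = 0}"
    using basis_exists by blast
  have fK: "finite K" using independent_span_bound[OF S(3) K(2)] K(1) S(2) by blast
  obtain B where B: "B \<subseteq> f ` S" "independent B" "f ` S \<subseteq> span B" "card B = dim (f ` S)"
    using basis_exists by blast
  have fB: "finite B" "card B \<le> card W" using independent_span_bound[OF W(2) B(2)] B(1) W(1) by auto
  obtain D where D: "D \<subseteq> S" "inj_on f D" "B = f ` D" using B(1) subset_image_inj by metis
  have fD: "finite D" "card D = card B" using D fB by (auto simp: finite_image_iff card_image)
  have "S \<subseteq> span (K \<union> D)"
  proof
    fix x assume x: "x \<in> S"
    have "f x \<in> span (f ` D)" using B(3) D(3) x by auto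
    then obtain y where y: "y \<in> span D" "f x = f y" using L.span_image by auto
    have yS: "y \<in> S" using span_minimal[OF D(1) S(1)] y(1) by auto
    have "x - y \<in> {x\<in>S. f x = 0}" using x yS y(2) S(1) by (auto simp: subspace_diff L.diff)
    then have "x - y \<in> span (K \<union> D)" using K(3) span_mono[of K "K \<union> D"] by auto
    moreover have "y \<in> span (K \<union> D)" using y(1) span_mono[of D "K \<union> D"] by auto
    ultimately have "(x - y) + y \<in> span (K \<union> D)" by (rule span_add)
    then show "x \<in> span (K \<union> D)" by simp
  qed
  then have "dim S \<le> card (K \<union> D)" using dim_le_card fK fD by blast
  also have "\<dots> \<le> card K + card D" by (rule card_Un_le)
  finally show ?thesis using K(4) fD fB by linarith
qed

interpretation chain: vector_space cscale
  by unfold_locales (auto simp: cscale_def fun_eq_iff algebra_simps)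

definition unit_chain :: "nat set \<Rightarrow> nat set \<Rightarrow> real" where
  "unit_chain \<sigma> = (\<lambda>\<tau>. if \<tau> = \<sigma> then 1 else 0)"

lemma inj_unit_chain: "inj unit_chain"
  by (rule injI) (auto simp: unit_chain_def fun_eq_iff split: if_splits)

lemma sum_fun_apply: "(\<Sum>i\<in>A. f i) x = (\<Sum>i\<in>A. f i x)"
  by (induction A rule: infinite_finite_induct) auto

lemma supported_in_span_unit_chains:
  assumes "finite T"
  shows "{g. \<forall>\<tau>. g \<tau> \<noteq> 0 \<longrightarrow> \<tau> \<in> T} \<subseteq> chain.span (unit_chain ` T)"
proof
  fix g :: "nat set \<Rightarrow> real" assume g: "g \<in> {g. \<forall>\<tau>. g \<tau> \<noteq> 0 \<longrightarrow> \<tau> \<in> T}"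
  have "g = (\<Sum>\<sigma>\<in>T. cscale (g \<sigma>) (unit_chain \<sigma>))"
  proof
    fix x
    have "(\<Sum>\<sigma>\<in>T. cscale (g \<sigma>) (unit_chain \<sigma>)) x = (\<Sum>\<sigma>\<in>T. g \<sigma> * unit_chain \<sigma> x)"
      by (simp add: sum_fun_apply cscale_def)
    also have "\<dots> = g x" using g assms
      by (auto simp: unit_chain_def if_distrib sum.delta cong: if_cong)
    finally show "g x = (\<Sum>\<sigma>\<in>T. cscale (g \<sigma>) (unit_chain \<sigma>)) x" by simp
  qed
  also have "\<dots> \<in> chain.span (unit_chain ` T)"
    by (intro chain.span_sum chain.span_scale chain.span_base) auto
  finally show "g \<in> chain.span (unit_chain ` T)" .
qed

lemma independent_unit_chains: "chain.independent (unit_chain ` T)"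
  unfolding chain.independent_explicit_finite_subsets
proof (intro allI impI ballI)
  fix S u v assume S: "S \<subseteq> unit_chain ` T" "finite S"
    and eq: "(\<Sum>v\<in>S. cscale (u v) v) = 0" and v: "v \<in> S"
  obtain \<sigma> where \<sigma>: "v = unit_chain \<sigma>" using S v by auto
  have "0 = (\<Sum>w\<in>S. u w * w \<sigma>)" using fun_cong[OF eq, of \<sigma>] by (simp add: sum_fun_apply cscale_def)
  also have "\<dots> = (\<Sum>w\<in>S. if w = v then u w else 0)"
  proof (rule sum.cong)
    fix w assume "w \<in> S"
    then obtain \<rho> where "w = unit_chain \<rho>" using S by auto
    then show "u w * w \<sigma> = (if w = v then u w else 0)" using \<sigma>
      by (auto simp: unit_chain_def fun_eq_iff)
  qed simp
  also have "\<dots> = u v" using S(2) v by simp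
  finally show "u v = 0" by simp
qed

text \<open>Faces are indexed by their number of vertices: \<open>faces Y (k+1)\<close> are the \<open>k\<close>-simplices.\<close>

definition faces :: "nat set set \<Rightarrow> nat \<Rightarrow> nat set set" where
  "faces Y j = {\<sigma>\<in>Y. card \<sigma> = j}"

lemma finite_faces: "finite Y \<Longrightarrow> finite (faces Y j)"
  by (simp add: faces_def)

lemma chains_eq_supported: "chains Y k = {g. \<forall>\<tau>. g \<tau> \<noteq> 0 \<longrightarrow> \<tau> \<in> faces Y (k+1)}"
  by (auto simp: chains_def faces_def)

lemma subspace_chains: "chain.subspace (chains Y k)"
  unfolding chain.subspace_def chains_def
  by (auto simp: cscale_def) (metis add.right_neutral)+

lemma linear_bdry: "Vector_Spaces.linear cscale cscale (bdry Y k)"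
  unfolding Vector_Spaces.linear_iff
  by (auto simp: chain.vector_space_axioms bdry_def fun_eq_iff cscale_def sum.distrib
      sum_distrib_left algebra_simps)

lemma bdry_supported: "bdry Y k ` A \<subseteq> {g. \<forall>\<tau>. g \<tau> \<noteq> 0 \<longrightarrow> \<tau> \<in> faces Y k}"
  by (auto simp: bdry_def faces_def split: if_splits)

lemma chains_in_span_unit_chains:
  "finite Y \<Longrightarrow> chains Y k \<subseteq> chain.span (unit_chain ` faces Y (k+1))"
  unfolding chains_eq_supported by (rule supported_in_span_unit_chains[OF finite_faces])

lemma dim_chains:
  assumes "finite Y"
  shows "chain.dim (chains Y k) = card (faces Y (k+1))"
proof -
  have "unit_chain ` faces Y (k+1) \<subseteq> chains Y k"
    by (auto simp: chains_eq_supported unit_chain_def split: if_splits)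
  then have "chain.span (unit_chain ` faces Y (k+1)) = chain.span (chains Y k)"
    using chain.span_mono[OF \<open>_ \<subseteq> chains Y k\<close>]
      chain.span_mono[OF chains_in_span_unit_chains[OF assms, of k]]
    by (auto simp: chain.span_span)
  then have "chain.dim (chains Y k) = card (unit_chain ` faces Y (k+1))"
    using chain.dim_eq_card[OF _ independent_unit_chains] by metis
  also have "\<dots> = card (faces Y (k+1))"
    using card_image[OF inj_on_subset[OF inj_unit_chain]] by simp
  finally show ?thesis .
qed

lemma dim_bdry_image_le:
  assumes "finite Y"
  shows "chain.dim (bdry Y (k+1) ` chains Y (k+1)) \<le> card (faces Y (k+2))"
proof -
  interpret L: Vector_Spaces.linear cscale cscale "bdry Y (k+1)" by (rule linear_bdry)
  have "bdry Y (k+1) ` chains Y (k+1) \<subseteq> bdry Y (k+1) ` chain.span (unit_chain ` faces Y (k+2))"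
    using chains_in_span_unit_chains[OF assms, of "k+1"] by auto
  also have "\<dots> = chain.span (bdry Y (k+1) ` unit_chain ` faces Y (k+2))"
    by (rule L.span_image[symmetric])
  finally have "chain.dim (bdry Y (k+1) ` chains Y (k+1)) \<le> card (bdry Y (k+1) ` unit_chain ` faces Y (k+2))"
    using chain.dim_le_card finite_faces[OF assms] by blast
  also have "\<dots> \<le> card (faces Y (k+2))"
    using card_image_le finite_faces[OF assms] by (metis finite_imageI le_trans)
  finally show ?thesis .
qed

lemma betti_ge_faces_diff:
  assumes "finite Y"
  shows "real (card (faces Y (k+1))) - real (card (faces Y k)) - real (card (faces Y (k+2)))
    \<le> real (betti k Y)"
proof -
  have "chain.dim (chains Y k) \<le> chain.dim {c\<in>chains Y k. bdry Y k c = 0} + card (unit_chain ` faces Y k)"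
    by (rule chain.dim_le_dim_kernel_add_card[OF subspace_chains
          chains_in_span_unit_chains[OF assms] _ linear_bdry])
       (use order_trans[OF bdry_supported supported_in_span_unit_chains[OF finite_faces[OF assms]]]
          finite_faces[OF assms] in auto)
  moreover have "card (unit_chain ` faces Y k) \<le> card (faces Y k)"
    using card_image_le finite_faces[OF assms] by blast
  ultimately show ?thesis
    using dim_chains[OF assms, of k] dim_bdry_image_le[OF assms, of k] unfolding betti_def by linarith
qed

section \<open>Growth of the face probabilities\<close>

locale log_concave_decreasing =
  fixes a :: "nat \<Rightarrow> real" and k :: nat
  assumes pos: "\<And>l. l \<le> k+1 \<Longrightarrow> a l > 0"
    and decreasing: "\<And>m. 1 \<le> m \<Longrightarrow> m \<le> k+1 \<Longrightarrow> a m \<le> a (m-1)"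
    and log_concave: "\<And>m. 2 \<le> m \<Longrightarrow> m \<le> k+1 \<Longrightarrow> a m * a (m-2) \<le> a (m-1)^2"
begin

lemma nonneg: "l \<le> k+1 \<Longrightarrow> a l \<ge> 0"
  using pos[of l] by simp

lemma antimono: "l1 \<le> l2 \<Longrightarrow> l2 \<le> k+1 \<Longrightarrow> a l2 \<le> a l1"
proof (induction l2 rule: dec_induct)
  case (step m)
  then show ?case using decreasing[of "Suc m"] by simp
qed simp

lemma prod_power_le_prefix_prod_power:
  assumes i: "1 \<le> i" "i \<le> k+1"
  shows "(\<Prod>l<k+1. a l) ^ i \<le> (\<Prod>l<i. a l) ^ (k+1)"
proof -
  define P where "P = (\<Prod>l<i. a l)"
  define R where "R = (\<Prod>l\<in>{i..<k+1}. a l)"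
  have split: "(\<Prod>l<k+1. a l) = P * R"
    unfolding P_def R_def using i
    by (metis prod.atLeastLessThan_concat lessThan_atLeast0 zero_le)
  have P0: "P \<ge> 0" unfolding P_def using i by (intro prod_nonneg nonneg) auto
  have R0: "R \<ge> 0" unfolding R_def by (intro prod_nonneg nonneg) auto
  have "R \<le> (\<Prod>l\<in>{i..<k+1}. a (i-1))"
    unfolding R_def using i by (intro prod_mono conjI nonneg antimono) auto
  then have R1: "R \<le> a (i-1) ^ (k+1-i)" by simp
  have "a (i-1) ^ i = (\<Prod>l<i. a (i-1))" by simp
  also have "\<dots> \<le> P" unfolding P_def using i
    by (intro prod_mono conjI nonneg antimono) auto
  finally have P1: "a (i-1) ^ i \<le> P" .
  have ai: "a (i-1) \<ge> 0" using nonneg[of "i-1"] i by simp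
  have "(P * R) ^ i = P^i * R^i" by (simp add: power_mult_distrib)
  also have "\<dots> \<le> P^i * (a (i-1) ^ (k+1-i))^i"
    using R1 R0 P0 by (intro mult_left_mono power_mono) auto
  also have "(a (i-1) ^ (k+1-i))^i = (a (i-1) ^ i)^(k+1-i)"
    by (simp add: power_mult[symmetric] mult.commute)
  also have "P^i * \<dots> \<le> P^i * P^(k+1-i)"
    using P1 P0 ai by (intro mult_left_mono power_mono) auto
  also have "\<dots> = P^(k+1)" using i by (simp add: power_add[symmetric])
  finally show ?thesis using split P_def by simp
qed

definition step_ratio :: "nat \<Rightarrow> real" where
  "step_ratio l = a (l-1) / a l"

lemma step_ratio_nonneg: "l \<le> k+1 \<Longrightarrow> step_ratio l \<ge> 0"
  unfolding step_ratio_def using nonneg[of l] nonneg[of "l-1"] by simp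

lemma step_ratio_le_last: "l \<le> k+1 \<Longrightarrow> 1 \<le> l \<Longrightarrow> step_ratio l \<le> step_ratio (k+1)"
proof (induction l rule: inc_induct)
  case base
  then show ?case by simp
next
  case (step m)
  have m: "1 \<le> m" "m < k+1" using step by auto
  have c: "a (Suc m) * a (Suc m - 2) \<le> a (Suc m - 1)^2" using log_concave[of "Suc m"] m by simp
  have p: "a (Suc m) > 0" "a m > 0" "a (m-1) > 0" using pos m by auto
  have "step_ratio m = a (m-1) / a m" by (simp add: step_ratio_def)
  also have "\<dots> \<le> a m / a (Suc m)"
    using c p m by (simp add: divide_simps power2_eq_square numeral_2_eq_2)
       (metis Suc_diff_Suc diff_Suc_1 mult.commute Suc_le_lessD numeral_2_eq_2 One_nat_def Suc_le_eq)
  also have "\<dots> = step_ratio (Suc m)" by (simp add: step_ratio_def)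
  finally show ?case using step by simp
qed

lemma le_mult_step_ratio_power: "l \<le> k \<Longrightarrow> a l \<le> a k * step_ratio (k+1) ^ (k - l)"
proof (induction l rule: inc_induct)
  case base
  then show ?case by simp
next
  case (step m)
  have q: "step_ratio (Suc m) \<le> step_ratio (k+1)" using step_ratio_le_last[of "Suc m"] step by simp
  have "a m = a (Suc m) * step_ratio (Suc m)" using pos[of "Suc m"] step by (simp add: step_ratio_def)
  also have "\<dots> \<le> a k * step_ratio (k+1) ^ (k - Suc m) * step_ratio (k+1)"
    by (rule mult_mono[OF step.IH q]) (use nonneg step_ratio_nonneg step in auto)
  also have "\<dots> = a k * step_ratio (k+1) ^ (k - m)"
    using step by (simp add: Suc_diff_Suc[symmetric] power_Suc2 mult.assoc)
  finally show ?case .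
qed

lemma prod_le_geometric_bound:
  assumes "a k \<le> M" "step_ratio (k+1) \<le> r"
  shows "(\<Prod>l<k+1. a l) \<le> (\<Prod>l<k+1. M * r ^ (k-l))"
proof (rule prod_mono)
  fix l assume l: "l \<in> {..<k+1}"
  then have "a l \<le> a k * step_ratio (k+1) ^ (k-l)" by (intro le_mult_step_ratio_power) auto
  also have "\<dots> \<le> M * r ^ (k-l)"
    using assms nonneg[of k] step_ratio_nonneg[of "k+1"] by (intro mult_mono power_mono) auto
  finally show "0 \<le> a l \<and> a l \<le> M * r ^ (k-l)" using l nonneg by auto
qed

end

definition admissible_face_probs :: "nat \<Rightarrow> (nat \<Rightarrow> real) \<Rightarrow> bool" where
  "admissible_face_probs k q \<longleftrightarrow> (\<forall>j \<le> k+2. q j > 0) \<and> q 0 \<le> 1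
     \<and> (\<forall>m. 1 \<le> m \<longrightarrow> m \<le> k+1 \<longrightarrow> q (m+1) * q (m-1) \<le> q m ^ 2)
     \<and> (\<forall>m. 2 \<le> m \<longrightarrow> m \<le> k+1 \<longrightarrow> q (m+1) * q (m-1)^3 \<le> q m ^ 3 * q (m-2))"

lemma ratio_product_le_square:
  fixes x y z w :: real
  assumes "y > 0" "w > 0" "z > 0" "x * z^3 \<le> y^3 * w"
  shows "(x/y) * (z/w) \<le> (y/z)^2"
proof -
  have "(x/y) * (z/w) = (x * z^3) / (y * w * z^2)"
    using assms by (simp add: field_simps power2_eq_square power3_eq_cube)
  also have "\<dots> \<le> (y^3 * w) / (y * w * z^2)" using assms by (intro divide_right_mono) auto
  also have "\<dots> = (y/z)^2" using assms by (simp add: field_simps power2_eq_square power3_eq_cube)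
  finally show ?thesis .
qed

lemma log_concave_decreasing_scaled_ratios:
  assumes q: "admissible_face_probs k q" and x: "x > 0"
  shows "log_concave_decreasing (\<lambda>l. x * (q (l+1) / q l)) k"
proof
  have qp: "\<And>j. j \<le> k+2 \<Longrightarrow> q j > 0" using q unfolding admissible_face_probs_def by auto
  show "0 < x * (q (l+1) / q l)" if "l \<le> k+1" for l using qp[of l] qp[of "l+1"] x that by simp
  show "x * (q (m+1) / q m) \<le> x * (q (m-1+1) / q (m-1))" if m: "1 \<le> m" "m \<le> k+1" for m
  proof -
    have "q (m+1) * q (m-1) \<le> q m ^ 2" using q m unfolding admissible_face_probs_def by auto
    moreover have "q (m+1) > 0" "q m > 0" "q (m-1) > 0" using qp m by auto
    ultimately have "q (m+1) / q m \<le> q m / q (m-1)"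
      by (simp add: divide_simps power2_eq_square mult.commute)
    then have "x * (q (m+1) / q m) \<le> x * (q m / q (m-1))" using x by (intro mult_left_mono) auto
    moreover have "m - 1 + 1 = m" using m by simp
    ultimately show ?thesis by simp
  qed
  show "x * (q (m+1) / q m) * (x * (q (m-2+1) / q (m-2))) \<le> (x * (q (m-1+1) / q (m-1)))^2"
    if m: "2 \<le> m" "m \<le> k+1" for m
  proof -
    have "q (m+1) * q (m-1)^3 \<le> q m ^ 3 * q (m-2)" using q m unfolding admissible_face_probs_def by auto
    moreover have "q (m+1) > 0" "q m > 0" "q (m-1) > 0" "q (m-2) > 0" using qp m by auto
    ultimately have "(q (m+1) / q m) * (q (m-1) / q (m-2)) \<le> (q m / q (m-1))^2"
      by (intro ratio_product_le_square) auto
    then have "x^2 * ((q (m+1) / q m) * (q (m-1) / q (m-2))) \<le> x^2 * (q m / q (m-1))^2"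
      by (rule mult_left_mono) auto
    moreover have "m - 1 + 1 = m" "m - 2 + 1 = m - 1" using m by auto
    ultimately show ?thesis by (simp add: power2_eq_square mult_ac)
  qed
qed

lemma prod_scaled_ratios:
  fixes q :: "nat \<Rightarrow> real"
  assumes "\<And>l. l \<le> i \<Longrightarrow> q l \<noteq> 0"
  shows "(\<Prod>l<i. x * (q (l+1) / q l)) = x^i * q i / q 0"
  using assms
proof (induction i)
  case (Suc i)
  then have "(\<Prod>l<Suc i. x * (q (l+1) / q l)) = x^i * q i / q 0 * (x * (q (i+1) / q i))"
    by simp
  also have "\<dots> = x^(Suc i) * q (Suc i) / q 0" using Suc.prems[of i] by (simp add: field_simps)
  finally show ?case .
qed simp

locale face_prob_asymptotics =
  fixes Q :: "nat \<Rightarrow> nat \<Rightarrow> real" and k :: nat and c :: real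
  assumes c_pos: "c > 0"
    and eventually_admissible: "eventually (\<lambda>n. admissible_face_probs k (Q n)) sequentially"
    and top_growth: "filterlim (\<lambda>n. real n ^ (k+1) * Q n (k+1)) at_top sequentially"
    and top_ratio: "(\<lambda>n. real n * (Q n (k+2) / Q n (k+1))) \<longlonglongrightarrow> c"
begin

definition ratio :: "nat \<Rightarrow> nat \<Rightarrow> real" where
  "ratio n l = real n * (Q n (l+1) / Q n l)"

lemma eventually_regular:
  "eventually (\<lambda>n. admissible_face_probs k (Q n) \<and> log_concave_decreasing (ratio n) k
     \<and> (\<forall>i \<le> k+2. (\<Prod>l<i. ratio n l) = real n ^ i * Q n i / Q n 0)) sequentially"
  using eventually_admissible eventually_ge_at_top[of 1]
proof eventually_elim
  case (elim n)
  then have qp: "\<And>j. j \<le> k+2 \<Longrightarrow> Q n j > 0" unfolding admissible_face_probs_def by auto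
  have "ratio n = (\<lambda>l. real n * (Q n (l+1) / Q n l))" by (simp add: fun_eq_iff ratio_def)
  moreover have "(\<Prod>l<i. ratio n l) = real n ^ i * Q n i / Q n 0" if "i \<le> k+2" for i
    unfolding ratio_def using that by (intro prod_scaled_ratios) (metis qp le_trans less_irrefl)
  ultimately show ?case using elim log_concave_decreasing_scaled_ratios[of k "Q n" "real n"] by auto
qed

lemma normalized_top_growth:
  "filterlim (\<lambda>n. real n ^ (k+1) * Q n (k+1) / Q n 0) at_top sequentially"
proof (rule filterlim_at_top_mono[OF top_growth])
  show "\<forall>\<^sub>F n in sequentially. real n ^ (k+1) * Q n (k+1) \<le> real n ^ (k+1) * Q n (k+1) / Q n 0"
    using eventually_admissible
  proof eventually_elim
    case (elim n)
    then have "Q n 0 > 0" "Q n 0 \<le> 1" "Q n (k+1) > 0" unfolding admissible_face_probs_def by auto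
    then show ?case by (subst le_divide_eq) (auto intro: mult_left_le)
  qed
qed

text \<open>Comparing the geometric means of the ratios, which decrease in \<open>l\<close>, transfers the growth of
  the full product to every initial segment.\<close>

lemma normalized_growth_below_top:
  assumes i: "1 \<le> i" "i \<le> k+1"
  shows "filterlim (\<lambda>n. real n ^ i * Q n i / Q n 0) at_top sequentially"
  unfolding filterlim_at_top
proof
  fix Z :: real
  define Z' where "Z' = max 1 (max Z 0 ^ (k+1))"
  have "eventually (\<lambda>n. Z' \<le> real n ^ (k+1) * Q n (k+1) / Q n 0) sequentially"
    using normalized_top_growth unfolding filterlim_at_top by blast
  with eventually_regular show "eventually (\<lambda>n. Z \<le> real n ^ i * Q n i / Q n 0) sequentially"
  proof eventually_elim
    case (elim n)
    then have prod: "(\<Prod>l<j. ratio n l) = real n ^ j * Q n j / Q n 0" if "j \<le> k+2" for j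
      using that by blast
    interpret log_concave_decreasing "ratio n" k using elim by blast
    have top: "Z' \<le> (\<Prod>l<k+1. ratio n l)" using elim(2) by (subst prod) auto
    have Z1: "Z' \<ge> 1" unfolding Z'_def by simp
    have "Z' \<le> Z' ^ i" using Z1 i by (simp add: self_le_power)
    also have "\<dots> \<le> (\<Prod>l<k+1. ratio n l) ^ i"
      using top Z1 by (intro power_mono) auto
    also have "\<dots> \<le> (\<Prod>l<i. ratio n l) ^ (k+1)" by (rule prod_power_le_prefix_prod_power[OF i])
    finally have "max Z 0 ^ (k+1) \<le> (\<Prod>l<i. ratio n l) ^ (k+1)" unfolding Z'_def by linarith
    moreover have "(\<Prod>l<i. ratio n l) \<ge> 0" using i by (intro prod_nonneg nonneg) auto
    ultimately have "max Z 0 \<le> (\<Prod>l<i. ratio n l)"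
      by (rule power_le_imp_le_base[where n=k, unfolded Suc_eq_plus1])
    then show ?case using i by (subst (asm) prod) auto
  qed
qed

lemma normalized_growth:
  assumes "1 \<le> i" "i \<le> k+2"
  shows "filterlim (\<lambda>n. real n ^ i * Q n i / Q n 0) at_top sequentially"
proof (cases "i \<le> k+1")
  case True
  then show ?thesis using normalized_growth_below_top assms by blast
next
  case False
  then have i: "i = k+2" using assms by simp
  have "filterlim (\<lambda>n. real n * (Q n (k+2) / Q n (k+1)) * (real n ^ (k+1) * Q n (k+1) / Q n 0))
      at_top sequentially"
    by (rule filterlim_tendsto_pos_mult_at_top[OF top_ratio c_pos normalized_top_growth])
  moreover have "eventually (\<lambda>n. real n * (Q n (k+2) / Q n (k+1)) * (real n ^ (k+1) * Q n (k+1) / Q n 0)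
      = real n ^ i * Q n i / Q n 0) sequentially"
    using eventually_admissible
  proof eventually_elim
    case (elim n)
    then have "Q n (k+1) > 0" unfolding admissible_face_probs_def by auto
    then show ?case using i by (simp add: field_simps)
  qed
  ultimately show ?thesis by (rule filterlim_cong[OF refl refl, THEN iffD1, rotated])
qed

text \<open>If \<open>ratio n k\<close> stayed bounded, log-concavity would bound every \<open>ratio n l\<close> in terms of
  \<open>ratio n k\<close> and \<open>ratio n k / ratio n (k+1) \<approx> ratio n k / c\<close>, so the product
  \<open>n^(k+1) Q n (k+1) / Q n 0\<close> of the first \<open>k+1\<close> ratios would stay bounded.\<close>

lemma ratio_growth: "filterlim (\<lambda>n. ratio n k) at_top sequentially"
  unfolding filterlim_at_top
proof
  fix Z :: real
  define M where "M = max Z 1"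
  define B where "B = (\<Prod>l<k+1. M * (2*M/c) ^ (k-l))"
  have "eventually (\<lambda>n. B + 1 \<le> real n ^ (k+1) * Q n (k+1) / Q n 0) sequentially"
    using normalized_top_growth unfolding filterlim_at_top by blast
  moreover have "eventually (\<lambda>n. c/2 < real n * (Q n (k+2) / Q n (k+1))) sequentially"
    using top_ratio c_pos by (intro order_tendstoD(1)) auto
  then have "eventually (\<lambda>n. c/2 < ratio n (k+1)) sequentially"
    by (simp add: ratio_def)
  ultimately show "eventually (\<lambda>n. Z \<le> ratio n k) sequentially" using eventually_regular
  proof eventually_elim
    case (elim n)
    then have prod: "(\<Prod>l<j. ratio n l) = real n ^ j * Q n j / Q n 0" if "j \<le> k+2" for j
      using that by blast
    interpret log_concave_decreasing "ratio n" k using elim by blast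
    show ?case
    proof (rule ccontr)
      assume "\<not> ?case"
      then have ak: "ratio n k \<le> M" unfolding M_def by auto
      have "step_ratio (k+1) = ratio n k / ratio n (k+1)" unfolding step_ratio_def by simp
      also have "\<dots> \<le> M / (c/2)"
        using ak elim(2) nonneg[of k] c_pos by (intro frac_le) (auto simp: M_def)
      finally have "step_ratio (k+1) \<le> 2*M/c" by (simp add: mult.commute)
      with ak have "(\<Prod>l<k+1. ratio n l) \<le> B" unfolding B_def by (rule prod_le_geometric_bound)
      moreover have "(\<Prod>l<k+1. ratio n l) = real n ^ (k+1) * Q n (k+1) / Q n 0"
        by (rule prod) simp
      ultimately show False using elim(1) by linarith
    qed
  qed
qed

end

section \<open>Random subcomplexes\<close>

definition subcomplexes :: "nat \<Rightarrow> nat set set set" where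
  "subcomplexes n = {Y. is_subcomplex n Y}"

lemma finite_subcomplexes: "finite (subcomplexes n)"
  by (rule finite_subset[of _ "Pow (Pow {0..<n})"]) (auto simp: subcomplexes_def is_subcomplex_def)

lemma subcomplex_finite: "Y \<in> subcomplexes n \<Longrightarrow> finite Y"
  unfolding subcomplexes_def is_subcomplex_def by (auto intro: finite_subset[where B="Pow {0..<n}"])

lemma subcomplex_downward_closed: "Y \<in> subcomplexes n \<Longrightarrow> \<sigma> \<in> Y \<Longrightarrow> \<tau> \<subseteq> \<sigma> \<Longrightarrow> \<tau> \<in> Y"
  unfolding subcomplexes_def is_subcomplex_def by blast

lemma subcomplex_Pow_subset_iff: "Y \<in> subcomplexes n \<Longrightarrow> Pow \<sigma> \<subseteq> Y \<longleftrightarrow> \<sigma> \<in> Y"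
  using subcomplex_downward_closed by blast

lemma subcomplex_face_subset: "Y \<in> subcomplexes n \<Longrightarrow> \<sigma> \<in> Y \<Longrightarrow> \<sigma> \<subseteq> {0..<n}"
  unfolding subcomplexes_def is_subcomplex_def by blast

lemma is_subcomplex_Pow: "\<sigma> \<subseteq> {0..<n} \<Longrightarrow> is_subcomplex n (Pow \<sigma>)"
  unfolding is_subcomplex_def by auto

definition face_count :: "nat \<Rightarrow> nat set set \<Rightarrow> real" where
  "face_count j Y = real (card (faces Y j))"

definition face_prob :: "nat set set pmf \<Rightarrow> nat \<Rightarrow> real" where
  "face_prob p j = measure_pmf.prob p {Z. {0..<j} \<in> Z}"

definition vertex_subsets :: "nat \<Rightarrow> nat \<Rightarrow> nat set set" where
  "vertex_subsets n j = {\<sigma>. \<sigma> \<subseteq> {0..<n} \<and> card \<sigma> = j}"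

lemma finite_vertex_subsets: "finite (vertex_subsets n j)"
  by (rule finite_subset[of _ "Pow {0..<n}"]) (auto simp: vertex_subsets_def)

lemma card_vertex_subsets: "card (vertex_subsets n j) = n choose j"
  unfolding vertex_subsets_def using n_subsets[of "{0..<n}" j] by simp

lemma face_count_eq_sum:
  "Y \<in> subcomplexes n \<Longrightarrow> face_count j Y = (\<Sum>\<sigma>\<in>vertex_subsets n j. of_bool (\<sigma> \<in> Y))"
proof -
  assume Y: "Y \<in> subcomplexes n"
  have "faces Y j = vertex_subsets n j \<inter> Y"
    using subcomplex_face_subset[OF Y] by (auto simp: faces_def vertex_subsets_def)
  then have "face_count j Y = (\<Sum>\<sigma>\<in>vertex_subsets n j \<inter> Y. 1)" by (simp add: face_count_def)
  also have "\<dots> = (\<Sum>\<sigma>\<in>vertex_subsets n j. if \<sigma> \<in> Y then 1 else 0)"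
    by (rule sum.inter_restrict[OF finite_vertex_subsets])
  also have "\<dots> = (\<Sum>\<sigma>\<in>vertex_subsets n j. of_bool (\<sigma> \<in> Y))" by (simp add: of_bool_def)
  finally show ?thesis .
qed

lemma card_overlapping_vertex_subsets_le:
  assumes \<sigma>: "\<sigma> \<in> vertex_subsets n j"
  shows "card {\<tau>\<in>vertex_subsets n j. card (\<sigma> \<inter> \<tau>) = i} \<le> 2^j * n^(j-i)"
proof -
  have fs: "finite \<sigma>" using \<sigma> by (auto simp: vertex_subsets_def intro: finite_subset)
  have "{\<tau>\<in>vertex_subsets n j. card (\<sigma> \<inter> \<tau>) = i} \<subseteq> (\<lambda>(A,B). A \<union> B) ` (Pow \<sigma> \<times> vertex_subsets n (j-i))"
  proof
    fix \<tau> assume \<tau>: "\<tau> \<in> {\<tau>\<in>vertex_subsets n j. card (\<sigma> \<inter> \<tau>) = i}"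
    have "finite \<tau>" using \<tau> by (auto simp: vertex_subsets_def intro: finite_subset)
    then have "card (\<tau> - \<sigma>) = card \<tau> - card (\<tau> \<inter> \<sigma>)" by (simp add: card_Diff_subset_Int)
    also have "\<dots> = j - i" using \<tau> by (auto simp: vertex_subsets_def Int_commute)
    finally have "\<tau> - \<sigma> \<in> vertex_subsets n (j-i)" using \<tau> by (auto simp: vertex_subsets_def)
    moreover have "\<tau> = (\<lambda>(A,B). A \<union> B) (\<sigma> \<inter> \<tau>, \<tau> - \<sigma>)" by auto
    ultimately show "\<tau> \<in> (\<lambda>(A,B). A \<union> B) ` (Pow \<sigma> \<times> vertex_subsets n (j-i))" by blast
  qed
  then have "card {\<tau>\<in>vertex_subsets n j. card (\<sigma> \<inter> \<tau>) = i}
      \<le> card ((\<lambda>(A,B). A \<union> B) ` (Pow \<sigma> \<times> vertex_subsets n (j-i)))"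
    by (rule card_mono[rotated]) (simp add: fs finite_vertex_subsets)
  also have "\<dots> \<le> card (Pow \<sigma> \<times> vertex_subsets n (j-i))"
    by (rule card_image_le) (simp add: fs finite_vertex_subsets)
  also have "\<dots> = 2^j * (n choose (j-i))"
    using \<sigma> fs by (simp add: card_cartesian_product card_vertex_subsets card_Pow)
      (simp add: vertex_subsets_def)
  also have "n choose (j-i) \<le> n^(j-i)"
    by (cases "j - i \<le> n") (auto simp: binomial_le_pow binomial_eq_0)
  then have "2^j * (n choose (j-i)) \<le> 2^j * n^(j-i)" by simp
  finally show ?thesis .
qed

lemma card_atLeast0LessThan_diff: "A \<subseteq> {0..<m} \<Longrightarrow> card ({0..<m} - A) = m - card A"
  by (simp add: card_Diff_subset finite_subset)

lemma sum_overlap_weights_le: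
  fixes g :: "nat \<Rightarrow> real"
  assumes \<sigma>: "\<sigma> \<in> vertex_subsets n j" and g: "\<And>i. i \<le> j \<Longrightarrow> g i \<ge> 0"
  shows "(\<Sum>\<tau>\<in>vertex_subsets n j. g (card (\<sigma> \<inter> \<tau>)))
    \<le> real (n choose j) * g 0 + (\<Sum>i=1..j. 2^j * real n^(j-i) * g i)"
proof -
  let ?N = "\<lambda>i. real (card {\<tau>\<in>vertex_subsets n j. card (\<sigma> \<inter> \<tau>) = i})"
  have "finite \<sigma>" using \<sigma> by (auto simp: vertex_subsets_def intro: finite_subset)
  then have img: "(\<lambda>\<tau>. card (\<sigma> \<inter> \<tau>)) ` vertex_subsets n j \<subseteq> {0..j}"
    using \<sigma> by (auto simp: vertex_subsets_def intro!: card_mono)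
  have "(\<Sum>\<tau>\<in>vertex_subsets n j. g (card (\<sigma> \<inter> \<tau>)))
      = (\<Sum>i=0..j. \<Sum>\<tau>\<in>{\<tau>\<in>vertex_subsets n j. card (\<sigma> \<inter> \<tau>) = i}. g (card (\<sigma> \<inter> \<tau>)))"
    by (rule sum.group[OF finite_vertex_subsets _ img, symmetric]) simp
  also have "\<dots> = (\<Sum>i=0..j. ?N i * g i)" by simp
  also have "\<dots> = ?N 0 * g 0 + (\<Sum>i=1..j. ?N i * g i)"
    by (subst sum.atLeast_Suc_atMost) auto
  also have "\<dots> \<le> real (n choose j) * g 0 + (\<Sum>i=1..j. 2^j * real n^(j-i) * g i)"
  proof (intro add_mono sum_mono mult_right_mono)
    have "card {\<tau>\<in>vertex_subsets n j. card (\<sigma> \<inter> \<tau>) = 0} \<le> card (vertex_subsets n j)"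
      by (rule card_mono[OF finite_vertex_subsets]) blast
    then show "?N 0 \<le> real (n choose j)" by (simp add: card_vertex_subsets)
    fix i assume "i \<in> {1..j}"
    have "card {\<tau>\<in>vertex_subsets n j. card (\<sigma> \<inter> \<tau>) = i} \<le> 2^j * n^(j-i)"
      by (rule card_overlapping_vertex_subsets_le[OF \<sigma>])
    then have "?N i \<le> real (2^j * n^(j-i))" by (simp only: of_nat_le_iff)
    then show "?N i \<le> 2^j * real n^(j-i)" by simp
  qed (use g in auto)
  finally show ?thesis .
qed

text \<open>The mean of \<open>face_count j\<close> conditioned on \<open>{} \<in> X\<close>, i.e. on \<open>X \<noteq> {}\<close>: the empty complex
  has no faces.\<close>

definition nonempty_mean_faces :: "nat \<Rightarrow> nat set set pmf \<Rightarrow> nat \<Rightarrow> real" where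
  "nonempty_mean_faces n p j = real (n choose j) * face_prob p j / face_prob p 0"

locale random_subcomplex =
  fixes n :: nat and p :: "nat set set pmf"
  assumes support_subcomplex: "\<forall>Y\<in>set_pmf p. is_subcomplex n Y"
begin

lemma prob_eq_sum: "measure_pmf.prob p A = (\<Sum>Y\<in>subcomplexes n \<inter> A. pmf p Y)"
proof -
  have s: "set_pmf p \<subseteq> subcomplexes n" using support_subcomplex by (auto simp: subcomplexes_def)
  have "measure_pmf.prob p A = measure_pmf.prob p (A \<inter> set_pmf p)"
    by (simp add: measure_Int_set_pmf)
  also have "\<dots> = sum (pmf p) (A \<inter> set_pmf p)"
    by (rule measure_measure_pmf_finite) (use s finite_subcomplexes in \<open>blast intro: finite_subset\<close>)
  also have "\<dots> = sum (pmf p) (subcomplexes n \<inter> A)"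
    by (rule sum.mono_neutral_left) (use s finite_subcomplexes in \<open>auto simp: set_pmf_eq\<close>)
  finally show ?thesis .
qed

lemma prob_cong:
  "(\<And>Y. Y \<in> subcomplexes n \<Longrightarrow> Y \<in> A \<longleftrightarrow> Y \<in> B) \<Longrightarrow> measure_pmf.prob p A = measure_pmf.prob p B"
proof -
  assume "\<And>Y. Y \<in> subcomplexes n \<Longrightarrow> Y \<in> A \<longleftrightarrow> Y \<in> B"
  then have "subcomplexes n \<inter> A = subcomplexes n \<inter> B" by blast
  then show ?thesis by (simp add: prob_eq_sum)
qed

lemma prob_mono:
  "(\<And>Y. Y \<in> subcomplexes n \<Longrightarrow> Y \<in> A \<Longrightarrow> Y \<in> B) \<Longrightarrow> measure_pmf.prob p A \<le> measure_pmf.prob p B"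
  unfolding prob_eq_sum by (rule sum_mono2) (use finite_subcomplexes in auto)

lemma prob_Pow_subset: "measure_pmf.prob p {Z. Pow \<sigma> \<subseteq> Z} = measure_pmf.prob p {Z. \<sigma> \<in> Z}"
  by (rule prob_cong) (auto dest: subcomplex_downward_closed)

lemma face_prob_antimono: "j \<le> j' \<Longrightarrow> face_prob p j' \<le> face_prob p j"
  unfolding face_prob_def
  by (rule prob_mono) (auto intro: subcomplex_downward_closed[where \<sigma>="{0..<j'}"])

definition expect :: "(nat set set \<Rightarrow> real) \<Rightarrow> real" where
  "expect g = (\<Sum>Y\<in>subcomplexes n. pmf p Y * g Y)"

lemma expect_of_bool: "expect (\<lambda>Y. of_bool (P Y)) = measure_pmf.prob p {Y. P Y}"
  unfolding expect_def prob_eq_sum sum.inter_restrict[OF finite_subcomplexes]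
  by (rule sum.cong) auto

lemma expect_mono: "(\<And>Y. Y \<in> subcomplexes n \<Longrightarrow> f Y \<le> g Y) \<Longrightarrow> expect f \<le> expect g"
  unfolding expect_def by (intro sum_mono mult_left_mono) auto

lemma expect_cong: "(\<And>Y. Y \<in> subcomplexes n \<Longrightarrow> f Y = g Y) \<Longrightarrow> expect f = expect g"
  unfolding expect_def by (intro sum.cong) auto

lemma expect_add: "expect (\<lambda>Y. f Y + g Y) = expect f + expect g"
  unfolding expect_def by (simp add: distrib_left sum.distrib)

lemma expect_cmult: "expect (\<lambda>Y. a * f Y) = a * expect f"
  unfolding expect_def by (simp add: sum_distrib_left mult_ac)

lemma expect_sum: "finite A \<Longrightarrow> expect (\<lambda>Y. \<Sum>x\<in>A. f x Y) = (\<Sum>x\<in>A. expect (f x))"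
  unfolding expect_def by (simp add: sum_distrib_left sum.swap[of _ "subcomplexes n"])

lemma markov_inequality:
  assumes "t > 0" "\<And>Y. g Y \<ge> 0"
  shows "measure_pmf.prob p {Y. t \<le> g Y} \<le> expect g / t"
proof -
  have "measure_pmf.prob p {Y. t \<le> g Y} = expect (\<lambda>Y. of_bool (t \<le> g Y))"
    by (rule expect_of_bool[symmetric])
  also have "\<dots> \<le> expect (\<lambda>Y. (1/t) * g Y)"
    by (rule expect_mono) (use assms in \<open>auto simp: field_simps\<close>)
  also have "\<dots> = expect g / t" by (subst expect_cmult) simp
  finally show ?thesis .
qed

lemma chebyshev_inequality:
  assumes t: "t > 0"
  shows "measure_pmf.prob p {Y. P Y \<and> t \<le> \<bar>g Y\<bar>} \<le> expect (\<lambda>Y. of_bool (P Y) * g Y ^ 2) / t^2"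
proof -
  have "measure_pmf.prob p {Y. P Y \<and> t \<le> \<bar>g Y\<bar>} = expect (\<lambda>Y. of_bool (P Y \<and> t \<le> \<bar>g Y\<bar>))"
    by (rule expect_of_bool[symmetric])
  also have "\<dots> \<le> expect (\<lambda>Y. (1/t^2) * (of_bool (P Y) * g Y ^ 2))"
  proof (rule expect_mono)
    fix Y
    show "of_bool (P Y \<and> t \<le> \<bar>g Y\<bar>) \<le> (1/t^2) * (of_bool (P Y) * g Y ^ 2)"
    proof (cases "P Y \<and> t \<le> \<bar>g Y\<bar>")
      case True
      then have "t^2 \<le> g Y ^ 2" using power_mono[of t "\<bar>g Y\<bar>" 2] t by simp
      then show ?thesis using True t by simp
    qed (auto simp: of_bool_def)
  qed
  also have "\<dots> = expect (\<lambda>Y. of_bool (P Y) * g Y ^ 2) / t^2" by (subst expect_cmult) simp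
  finally show ?thesis .
qed

lemma expect_centered_square:
  "expect (\<lambda>Y. of_bool ({} \<in> Y) * (face_count j Y - \<mu>)^2)
    = expect (\<lambda>Y. face_count j Y ^ 2) - 2 * \<mu> * expect (face_count j) + \<mu>^2 * face_prob p 0"
proof -
  have "expect (\<lambda>Y. of_bool ({} \<in> Y) * (face_count j Y - \<mu>)^2)
      = expect (\<lambda>Y. face_count j Y ^ 2 + (-2 * \<mu>) * face_count j Y + \<mu>^2 * of_bool ({} \<in> Y))"
  proof (rule expect_cong)
    fix Y assume Y: "Y \<in> subcomplexes n"
    show "of_bool ({} \<in> Y) * (face_count j Y - \<mu>)^2
        = face_count j Y ^ 2 + (-2 * \<mu>) * face_count j Y + \<mu>^2 * of_bool ({} \<in> Y)"
    proof (cases "{} \<in> Y")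
      case True then show ?thesis by (simp add: power2_diff algebra_simps)
    next
      case False
      then have "Y = {}" using subcomplex_downward_closed[OF Y] by blast
      then show ?thesis by (simp add: face_count_def faces_def)
    qed
  qed
  also have "\<dots> = expect (\<lambda>Y. face_count j Y ^ 2) - 2 * \<mu> * expect (face_count j) + \<mu>^2 * face_prob p 0"
    unfolding expect_add expect_cmult expect_of_bool face_prob_def by simp
  finally show ?thesis .
qed

end

locale homogeneous_random_subcomplex = random_subcomplex +
  assumes homogeneous: "homogeneous n p"
begin

lemma permutation_onto_prefix:
  assumes \<sigma>: "\<sigma> \<subseteq> {0..<n}"
  obtains \<pi> where "\<pi> permutes {0..<n}" "\<pi> ` {0..<card \<sigma>} = \<sigma>"
proof -
  define j where "j = card \<sigma>"
  have fs: "finite \<sigma>" using \<sigma> finite_subset by blast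
  have jn: "j \<le> n" using card_mono[OF _ \<sigma>] by (simp add: j_def)
  obtain g where g: "bij_betw g {0..<j} \<sigma>"
    using finite_same_card_bij[of "{0..<j}" \<sigma>] fs by (auto simp: j_def)
  have "card ({0..<n} - {0..<j}) = card ({0..<n} - \<sigma>)"
    using \<sigma> jn by (simp add: card_Diff_subset fs j_def)
  then obtain h where h: "bij_betw h ({0..<n} - {0..<j}) ({0..<n} - \<sigma>)"
    using finite_same_card_bij[of "{0..<n} - {0..<j}" "{0..<n} - \<sigma>"] by auto
  define \<pi> where "\<pi> x = (if x < j then g x else if x < n then h x else x)" for x
  have b1: "bij_betw \<pi> {0..<j} \<sigma>"
    using g by (rule bij_betw_cong[THEN iffD1, rotated]) (auto simp: \<pi>_def)
  have b2: "bij_betw \<pi> ({0..<n} - {0..<j}) ({0..<n} - \<sigma>)"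
    using h by (rule bij_betw_cong[THEN iffD1, rotated]) (auto simp: \<pi>_def)
  have "bij_betw \<pi> ({0..<j} \<union> ({0..<n} - {0..<j})) (\<sigma> \<union> ({0..<n} - \<sigma>))"
    by (rule bij_betw_combine[OF b1 b2]) auto
  moreover have "{0..<j} \<union> ({0..<n} - {0..<j}) = {0..<n}" "\<sigma> \<union> ({0..<n} - \<sigma>) = {0..<n}"
    using jn \<sigma> by auto
  ultimately have "bij_betw \<pi> {0..<n} {0..<n}" by simp
  then have "\<pi> permutes {0..<n}"
    unfolding permutes_altdef using jn by (auto simp: \<pi>_def)
  moreover have "\<pi> ` {0..<j} = \<sigma>" using b1 by (simp add: bij_betw_def)
  ultimately show ?thesis using that unfolding j_def by blast
qed

lemma prob_face_mem:
  assumes "\<sigma> \<subseteq> {0..<n}"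
  shows "measure_pmf.prob p {Z. \<sigma> \<in> Z} = face_prob p (card \<sigma>)"
proof -
  obtain \<pi> where perm: "\<pi> permutes {0..<n}" and im: "\<pi> ` {0..<card \<sigma>} = \<sigma>"
    using permutation_onto_prefix[OF assms] .
  have inj: "inj \<pi>" by (rule permutes_inj[OF perm])
  let ?F = "\<lambda>Y. (\<lambda>s. \<pi> ` s) ` Y"
  have "measure_pmf.prob p {Z. \<sigma> \<in> Z} = measure_pmf.prob (map_pmf ?F p) {Z. \<sigma> \<in> Z}"
    using homogeneous perm unfolding homogeneous_def by simp
  also have "\<dots> = measure_pmf.prob p (?F -` {Z. \<sigma> \<in> Z})" by simp
  also have "?F -` {Z. \<sigma> \<in> Z} = {Z. {0..<card \<sigma>} \<in> Z}"
  proof -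
    have "\<sigma> \<in> ?F Y \<longleftrightarrow> {0..<card \<sigma>} \<in> Y" for Y
    proof
      assume "\<sigma> \<in> ?F Y"
      then obtain \<rho> where "\<rho> \<in> Y" "\<pi> ` \<rho> = \<pi> ` {0..<card \<sigma>}" using im by auto
      then show "{0..<card \<sigma>} \<in> Y" using inj_image_eq_iff[OF inj] by auto
    next
      assume "{0..<card \<sigma>} \<in> Y" then show "\<sigma> \<in> ?F Y" using im by auto
    qed
    then show ?thesis by auto
  qed
  finally show ?thesis unfolding face_prob_def .
qed

lemma expect_face_count: "expect (face_count j) = real (n choose j) * face_prob p j"
proof -
  have "expect (face_count j) = expect (\<lambda>Y. \<Sum>\<sigma>\<in>vertex_subsets n j. of_bool (\<sigma> \<in> Y))"
    by (rule expect_cong) (rule face_count_eq_sum)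
  also have "\<dots> = (\<Sum>\<sigma>\<in>vertex_subsets n j. expect (\<lambda>Y. of_bool (\<sigma> \<in> Y)))"
    by (rule expect_sum[OF finite_vertex_subsets])
  also have "\<dots> = (\<Sum>\<sigma>\<in>vertex_subsets n j. face_prob p j)"
    by (rule sum.cong[OF refl]) (simp add: expect_of_bool prob_face_mem vertex_subsets_def)
  also have "\<dots> = real (n choose j) * face_prob p j" by (simp add: card_vertex_subsets)
  finally show ?thesis .
qed

lemma markov_face_count:
  "t > 0 \<Longrightarrow> measure_pmf.prob p {Y. t \<le> face_count j Y} \<le> real (n choose j) * face_prob p j / t"
  using markov_inequality[of t "face_count j"] by (simp add: face_count_def expect_face_count)

end

locale spatially_independent_subcomplex = homogeneous_random_subcomplex +
  assumes spatially_independent: "spatially_independent n p"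
begin

lemma prob_both_mem:
  assumes \<sigma>: "\<sigma> \<subseteq> {0..<n}" and \<tau>: "\<tau> \<subseteq> {0..<n}"
  shows "measure_pmf.prob p {Z. \<sigma> \<in> Z \<and> \<tau> \<in> Z} * face_prob p (card (\<sigma> \<inter> \<tau>))
       = face_prob p (card \<sigma>) * face_prob p (card \<tau>)"
proof -
  have Un: "measure_pmf.prob p {Z. Pow \<sigma> \<union> Pow \<tau> \<subseteq> Z} = measure_pmf.prob p {Z. \<sigma> \<in> Z \<and> \<tau> \<in> Z}"
    by (rule prob_cong) (auto dest: subcomplex_downward_closed)
  have Int: "Pow \<sigma> \<inter> Pow \<tau> = Pow (\<sigma> \<inter> \<tau>)" by auto
  have "\<sigma> \<inter> \<tau> \<subseteq> {0..<n}" using \<sigma> by auto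
  then show ?thesis
    using spatially_independent[unfolded spatially_independent_def, rule_format,
        OF is_subcomplex_Pow[OF \<sigma>] is_subcomplex_Pow[OF \<tau>]]
    unfolding Un Int prob_Pow_subset prob_face_mem[OF \<sigma>] prob_face_mem[OF \<tau>] by (simp add: prob_face_mem)
qed

lemma prob_three_mem:
  assumes "\<sigma> \<subseteq> {0..<n}" "\<tau> \<subseteq> {0..<n}" "\<rho> \<subseteq> {0..<n}"
  shows "measure_pmf.prob p {Z. \<sigma> \<in> Z \<and> \<tau> \<in> Z \<and> \<rho> \<in> Z}
       * measure_pmf.prob p {Z. \<sigma> \<inter> \<rho> \<in> Z \<and> \<tau> \<inter> \<rho> \<in> Z}
       = measure_pmf.prob p {Z. \<sigma> \<in> Z \<and> \<tau> \<in> Z} * measure_pmf.prob p {Z. \<rho> \<in> Z}"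
proof -
  have Un2: "measure_pmf.prob p {Z. Pow \<alpha> \<union> Pow \<beta> \<subseteq> Z} = measure_pmf.prob p {Z. \<alpha> \<in> Z \<and> \<beta> \<in> Z}"
    for \<alpha> \<beta> by (rule prob_cong) (simp only: mem_Collect_eq Un_subset_iff subcomplex_Pow_subset_iff)
  have Un3: "measure_pmf.prob p {Z. (Pow \<sigma> \<union> Pow \<tau>) \<union> Pow \<rho> \<subseteq> Z}
      = measure_pmf.prob p {Z. \<sigma> \<in> Z \<and> \<tau> \<in> Z \<and> \<rho> \<in> Z}"
    by (rule prob_cong) (simp only: mem_Collect_eq Un_subset_iff subcomplex_Pow_subset_iff conj_assoc)
  have Int: "(Pow \<sigma> \<union> Pow \<tau>) \<inter> Pow \<rho> = Pow (\<sigma> \<inter> \<rho>) \<union> Pow (\<tau> \<inter> \<rho>)" by blast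
  have "is_subcomplex n (Pow \<sigma> \<union> Pow \<tau>)" using assms unfolding is_subcomplex_def by auto
  from spatially_independent[unfolded spatially_independent_def, rule_format,
      OF this is_subcomplex_Pow[OF assms(3)]]
  show ?thesis unfolding Un3 Int Un2 prob_Pow_subset .
qed

text \<open>The two inequalities below compare \<open>{0..m}\<close> with faces of codimension one in it:
  the intersection of two such faces has \<open>m-1\<close> vertices, that of three has \<open>m-2\<close>.\<close>

lemma face_prob_log_concave:
  assumes m: "1 \<le> m" "m + 1 \<le> n" and pos: "face_prob p (m-1) > 0"
  shows "face_prob p (m+1) * face_prob p (m-1) \<le> face_prob p m ^ 2"
proof -
  define \<sigma> where "\<sigma> = {0..<m+1} - {0}"
  define \<tau> where "\<tau> = {0..<m+1} - {1}"
  have "\<sigma> \<inter> \<tau> = {0..<m+1} - {0,1}" unfolding \<sigma>_def \<tau>_def by auto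
  then have c: "card \<sigma> = m" "card \<tau> = m" "card (\<sigma> \<inter> \<tau>) = m - 1"
    unfolding \<sigma>_def \<tau>_def using m by (simp_all add: card_atLeast0LessThan_diff)
  have sub: "\<sigma> \<subseteq> {0..<n}" "\<tau> \<subseteq> {0..<n}" using m unfolding \<sigma>_def \<tau>_def by auto
  have "face_prob p (m+1) \<le> measure_pmf.prob p {Z. \<sigma> \<in> Z \<and> \<tau> \<in> Z}"
    unfolding face_prob_def
    by (rule prob_mono) (auto intro: subcomplex_downward_closed[where \<sigma>="{0..<m+1}"] simp: \<sigma>_def \<tau>_def)
  then have "face_prob p (m+1) * face_prob p (m-1) \<le> face_prob p m * face_prob p m"
    using prob_both_mem[OF sub] c pos by (metis mult_right_mono less_imp_le)
  then show ?thesis by (simp add: power2_eq_square)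
qed

lemma face_prob_cubic_bound:
  assumes m: "2 \<le> m" "m + 1 \<le> n" and pos: "face_prob p (m-1) > 0" "face_prob p (m-2) > 0"
  shows "face_prob p (m+1) * face_prob p (m-1) ^ 3 \<le> face_prob p m ^ 3 * face_prob p (m-2)"
proof -
  define \<sigma> where "\<sigma> = {0..<m+1} - {0}"
  define \<tau> where "\<tau> = {0..<m+1} - {1}"
  define \<rho> where "\<rho> = {0..<m+1} - {2}"
  have "\<sigma> \<inter> \<tau> = {0..<m+1} - {0,1}" "\<sigma> \<inter> \<rho> = {0..<m+1} - {0,2}" "\<tau> \<inter> \<rho> = {0..<m+1} - {1,2}"
    "(\<sigma> \<inter> \<rho>) \<inter> (\<tau> \<inter> \<rho>) = {0..<m+1} - {0,1,2}"
    unfolding \<sigma>_def \<tau>_def \<rho>_def by auto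
  then have c: "card \<sigma> = m" "card \<tau> = m" "card \<rho> = m" "card (\<sigma> \<inter> \<tau>) = m - 1"
    "card (\<sigma> \<inter> \<rho>) = m - 1" "card (\<tau> \<inter> \<rho>) = m - 1" "card ((\<sigma> \<inter> \<rho>) \<inter> (\<tau> \<inter> \<rho>)) = m - 2"
    unfolding \<sigma>_def \<tau>_def \<rho>_def using m by (simp_all add: card_atLeast0LessThan_diff)
  have sub: "\<sigma> \<subseteq> {0..<n}" "\<tau> \<subseteq> {0..<n}" "\<rho> \<subseteq> {0..<n}"
    using m unfolding \<sigma>_def \<tau>_def \<rho>_def by auto
  then have sub': "\<sigma> \<inter> \<rho> \<subseteq> {0..<n}" "\<tau> \<inter> \<rho> \<subseteq> {0..<n}" by auto
  define q where "q = face_prob p"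
  define T where "T = measure_pmf.prob p {Z. \<sigma> \<in> Z \<and> \<tau> \<in> Z \<and> \<rho> \<in> Z}"
  have pair: "measure_pmf.prob p {Z. \<sigma> \<in> Z \<and> \<tau> \<in> Z} = q m * q m / q (m-1)"
    using prob_both_mem[OF sub(1,2)] c pos unfolding q_def by (simp add: field_simps)
  have pair': "measure_pmf.prob p {Z. \<sigma> \<inter> \<rho> \<in> Z \<and> \<tau> \<inter> \<rho> \<in> Z} = q (m-1) * q (m-1) / q (m-2)"
    using prob_both_mem[OF sub'] c pos unfolding q_def by (simp add: field_simps)
  have "T * (q (m-1) * q (m-1) / q (m-2)) = q m * q m / q (m-1) * q m"
    using prob_three_mem[OF sub] unfolding pair pair' prob_face_mem[OF sub(3)] c(3) T_def q_def .
  with pos have "T = q m ^ 3 * q (m-2) / q (m-1) ^ 3"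
    unfolding q_def by (simp add: field_simps power3_eq_cube)
  moreover have "q (m+1) \<le> T"
    unfolding q_def T_def face_prob_def
    by (rule prob_mono) (auto intro: subcomplex_downward_closed[where \<sigma>="{0..<m+1}"] simp: \<sigma>_def \<tau>_def \<rho>_def)
  ultimately show ?thesis using pos unfolding q_def by (simp add: pos_le_divide_eq)
qed

lemma expect_face_count_square:
  assumes pos: "\<And>i. i \<le> j \<Longrightarrow> face_prob p i > 0"
  shows "expect (\<lambda>Y. face_count j Y ^ 2) = (\<Sum>\<sigma>\<in>vertex_subsets n j. \<Sum>\<tau>\<in>vertex_subsets n j.
      face_prob p j * face_prob p j / face_prob p (card (\<sigma> \<inter> \<tau>)))"
proof -
  have "expect (\<lambda>Y. face_count j Y ^ 2) = expect (\<lambda>Y. \<Sum>\<sigma>\<in>vertex_subsets n j.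
      \<Sum>\<tau>\<in>vertex_subsets n j. of_bool (\<sigma> \<in> Y \<and> \<tau> \<in> Y))"
    by (rule expect_cong) (simp add: face_count_eq_sum power2_eq_square sum_product of_bool_conj)
  also have "\<dots> = (\<Sum>\<sigma>\<in>vertex_subsets n j. \<Sum>\<tau>\<in>vertex_subsets n j. expect (\<lambda>Y. of_bool (\<sigma> \<in> Y \<and> \<tau> \<in> Y)))"
    by (simp only: expect_sum[OF finite_vertex_subsets])
  also have "\<dots> = (\<Sum>\<sigma>\<in>vertex_subsets n j. \<Sum>\<tau>\<in>vertex_subsets n j.
      face_prob p j * face_prob p j / face_prob p (card (\<sigma> \<inter> \<tau>)))"
  proof (intro sum.cong refl)
    fix \<sigma> \<tau> assume st: "\<sigma> \<in> vertex_subsets n j" "\<tau> \<in> vertex_subsets n j"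
    then have "card (\<sigma> \<inter> \<tau>) \<le> j"
      by (auto simp: vertex_subsets_def intro!: card_mono intro: finite_subset[OF _ finite_atLeastLessThan])
    then have "face_prob p (card (\<sigma> \<inter> \<tau>)) > 0" by (rule pos)
    then show "expect (\<lambda>Y. of_bool (\<sigma> \<in> Y \<and> \<tau> \<in> Y))
        = face_prob p j * face_prob p j / face_prob p (card (\<sigma> \<inter> \<tau>))"
      using prob_both_mem[of \<sigma> \<tau>] st by (simp add: expect_of_bool vertex_subsets_def field_simps)
  qed
  finally show ?thesis .
qed

lemma expect_face_count_square_le:
  assumes pos: "\<And>i. i \<le> j \<Longrightarrow> face_prob p i > 0"
  shows "expect (\<lambda>Y. face_count j Y ^ 2)
    \<le> real (n choose j) ^ 2 * (face_prob p j * face_prob p j / face_prob p 0)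
      + real (n choose j) * (\<Sum>i=1..j. 2^j * real n^(j-i) * (face_prob p j * face_prob p j / face_prob p i))"
proof -
  define g where "g i = face_prob p j * face_prob p j / face_prob p i" for i
  have g: "g i \<ge> 0" if "i \<le> j" for i using pos[OF that] pos[of j] by (simp add: g_def)
  have "expect (\<lambda>Y. face_count j Y ^ 2) = (\<Sum>\<sigma>\<in>vertex_subsets n j. \<Sum>\<tau>\<in>vertex_subsets n j. g (card (\<sigma> \<inter> \<tau>)))"
    unfolding g_def by (rule expect_face_count_square[OF pos])
  also have "\<dots> \<le> (\<Sum>\<sigma>\<in>vertex_subsets n j. real (n choose j) * g 0 + (\<Sum>i=1..j. 2^j * real n^(j-i) * g i))"
    by (intro sum_mono sum_overlap_weights_le g)
  also have "\<dots> = real (n choose j) ^ 2 * g 0 + real (n choose j) * (\<Sum>i=1..j. 2^j * real n^(j-i) * g i)"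
    by (simp add: card_vertex_subsets algebra_simps power2_eq_square)
  finally show ?thesis unfolding g_def .
qed

lemma nonempty_variance_face_count_le:
  assumes pos: "\<And>i. i \<le> j \<Longrightarrow> face_prob p i > 0"
  shows "expect (\<lambda>Y. of_bool ({} \<in> Y) * (face_count j Y - nonempty_mean_faces n p j)^2)
    \<le> real (n choose j) * (\<Sum>i=1..j. 2^j * real n^(j-i) * (face_prob p j * face_prob p j / face_prob p i))"
proof -
  have "face_prob p 0 > 0" using pos by simp
  then have "expect (\<lambda>Y. of_bool ({} \<in> Y) * (face_count j Y - nonempty_mean_faces n p j)^2)
      = expect (\<lambda>Y. face_count j Y ^ 2) - real (n choose j)^2 * (face_prob p j * face_prob p j / face_prob p 0)"
    unfolding expect_centered_square expect_face_count nonempty_mean_faces_def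
    by (simp add: field_simps power2_eq_square)
  then show ?thesis using expect_face_count_square_le[of j, OF pos] by linarith
qed

lemma face_count_deviation_prob_le:
  assumes pos: "\<And>i. i \<le> j \<Longrightarrow> face_prob p i > 0" and jn: "j \<le> n" and \<delta>: "\<delta> > 0"
  defines "\<mu> \<equiv> nonempty_mean_faces n p j"
  shows "measure_pmf.prob p {Y. {} \<in> Y \<and> \<delta> * \<mu> \<le> \<bar>face_count j Y - \<mu>\<bar>} / face_prob p 0
    \<le> (\<Sum>i=1..j. 2^j * real n^(j-i) * face_prob p 0 / (\<delta>^2 * real (n choose j) * face_prob p i))"
proof -
  define C where "C = real (n choose j)"
  define q where "q = face_prob p j"
  define q0 where "q0 = face_prob p 0"
  define V where "V = (\<Sum>i=1..j. 2^j * real n^(j-i) * (q * q / face_prob p i))"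
  have C: "C > 0" unfolding C_def using jn by simp
  have q: "q > 0" "q0 > 0" unfolding q_def q0_def using pos by auto
  have \<mu>: "\<mu> = C * q / q0" "\<mu> > 0" unfolding \<mu>_def nonempty_mean_faces_def C_def q_def q0_def
    using C q by (simp_all add: C_def q_def q0_def)
  have var: "expect (\<lambda>Y. of_bool ({} \<in> Y) * (face_count j Y - \<mu>)^2) \<le> C * V"
    using nonempty_variance_face_count_le[OF pos] unfolding \<mu>_def C_def V_def q_def .
  have "measure_pmf.prob p {Y. {} \<in> Y \<and> \<delta> * \<mu> \<le> \<bar>face_count j Y - \<mu>\<bar>} \<le> C * V / (\<delta> * \<mu>)^2"
    using chebyshev_inequality[of "\<delta> * \<mu>" "\<lambda>Y. {} \<in> Y" "\<lambda>Y. face_count j Y - \<mu>"] var \<delta> \<mu>(2)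
    by (meson divide_right_mono dual_order.trans mult_pos_pos zero_le_power2)
  then have "measure_pmf.prob p {Y. {} \<in> Y \<and> \<delta> * \<mu> \<le> \<bar>face_count j Y - \<mu>\<bar>} / q0
      \<le> C * V / (\<delta> * \<mu>)^2 / q0"
    using q by (intro divide_right_mono) auto
  also have "\<dots> = q0 / (\<delta>^2 * C * q * q) * V"
    unfolding \<mu>(1) using q C \<delta> by (simp add: field_simps power2_eq_square)
  also have "\<dots> = (\<Sum>i=1..j. 2^j * real n^(j-i) * q0 / (\<delta>^2 * C * face_prob p i))"
    unfolding V_def sum_distrib_left
  proof (rule sum.cong[OF refl])
    fix i assume "i \<in> {1..j}"
    then have "face_prob p i > 0" using pos by auto
    then show "q0 / (\<delta>^2 * C * q * q) * (2^j * real n^(j-i) * (q * q / face_prob p i))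
        = 2^j * real n^(j-i) * q0 / (\<delta>^2 * C * face_prob p i)"
      using q C \<delta> by (simp add: field_simps)
  qed
  finally show ?thesis unfolding C_def q0_def .
qed

end

section \<open>The sparse regime\<close>

lemma Suc_mult_choose_Suc: "real (Suc k) * real (n choose Suc k) = real (n - k) * real (n choose k)"
  by (metis binomial_absorption binomial_absorb_comp of_nat_mult)

lemma choose_Suc_le: "real (n choose Suc k) \<le> real n / real (Suc k) * real (n choose k)"
proof -
  have "real (Suc k) * real (n choose Suc k) \<le> real n * real (n choose k)"
    unfolding Suc_mult_choose_Suc by (intro mult_right_mono) auto
  then show ?thesis by (simp add: field_simps)
qed

lemma choose_le_choose_Suc:
  assumes "2 * k + 1 \<le> n"
  shows "real (n choose k) \<le> 2 * real (Suc k) / real n * real (n choose Suc k)"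
proof -
  have "real n \<le> 2 * real (n - k)" using assms by (simp add: of_nat_diff)
  then have "real n * real (n choose k) \<le> 2 * (real (n - k) * real (n choose k))"
    using mult_right_mono[of "real n" "2 * real (n - k)" "real (n choose k)"] by (simp add: mult.assoc)
  then show ?thesis using assms unfolding Suc_mult_choose_Suc[symmetric] by (simp add: field_simps)
qed

lemma deviation_bound_term_tendsto_zero:
  fixes Q :: "nat \<Rightarrow> nat \<Rightarrow> real"
  assumes lim: "filterlim (\<lambda>n. real n ^ i * Q n i / Q n 0) at_top sequentially"
    and ev: "eventually (\<lambda>n. Q n i > 0 \<and> Q n 0 > 0) sequentially"
    and i: "1 \<le> i" "i \<le> j" and \<delta>: "\<delta> > 0"
  shows "(\<lambda>n. 2^j * real n^(j-i) * Q n 0 / (\<delta>^2 * real (n choose j) * Q n i)) \<longlonglongrightarrow> 0"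
proof (rule tendsto_sandwich[OF _ _ tendsto_const])
  define K where "K = 2^j * real j^j / \<delta>^2"
  have "(\<lambda>n. K * inverse (real n ^ i * Q n i / Q n 0)) \<longlonglongrightarrow> K * 0"
    by (intro tendsto_mult tendsto_const tendsto_inverse_0_at_top[OF lim])
  then show "(\<lambda>n. K * inverse (real n ^ i * Q n i / Q n 0)) \<longlonglongrightarrow> 0" by simp
  show "eventually (\<lambda>n. 0 \<le> 2^j * real n^(j-i) * Q n 0 / (\<delta>^2 * real (n choose j) * Q n i)) sequentially"
    using ev by eventually_elim auto
  show "eventually (\<lambda>n. 2^j * real n^(j-i) * Q n 0 / (\<delta>^2 * real (n choose j) * Q n i)
      \<le> K * inverse (real n ^ i * Q n i / Q n 0)) sequentially"
    using ev eventually_ge_at_top[of "j+1"]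
  proof eventually_elim
    case (elim n)
    then have q: "Q n i > 0" "Q n 0 > 0" and nj: "j \<le> n" "n > 0" by auto
    have j0: "real j > 0" using i by simp
    have "(real n / real j) ^ j \<le> real (n choose j)"
      using binomial_ge_n_over_k_pow_k[OF nj(1)] by simp
    moreover have "(real n / real j) ^ j > 0" using nj j0 by simp
    ultimately have "2^j * real n^(j-i) * Q n 0 / (\<delta>^2 * real (n choose j) * Q n i)
        \<le> 2^j * real n^(j-i) * Q n 0 / (\<delta>^2 * (real n / real j) ^ j * Q n i)"
      using q \<delta> nj by (intro divide_left_mono mult_right_mono mult_left_mono mult_pos_pos) auto
    also have "\<dots> = K * inverse (real n ^ i * Q n i / Q n 0)"
    proof -
      have "real n ^ j = real n ^ (j-i) * real n ^ i" using i by (simp add: power_add[symmetric])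
      then show ?thesis unfolding K_def using q nj j0 \<delta> by (simp add: field_simps power_divide)
    qed
    finally show ?case .
  qed
qed

lemma ratio_ge_of_concentrated_counts:
  fixes f0 f1 f2 \<beta> \<mu>1 \<mu>2 \<delta> c \<epsilon> :: real
  assumes \<delta>: "\<delta> > 0" "\<delta> \<le> 1/2" "\<delta> \<le> \<epsilon> / (4 * (c + 3 + \<epsilon>))" and c: "c > 0" and \<epsilon>: "\<epsilon> > 0"
    and \<mu>: "\<mu>1 > 0" "\<mu>2 \<le> (c + \<delta>) * \<mu>1" "\<mu>2 \<ge> 0"
    and f: "\<bar>f1 - \<mu>1\<bar> < \<delta> * \<mu>1" "\<bar>f2 - \<mu>2\<bar> < \<delta> * \<mu>2" "f0 < \<delta> * \<mu>1"
    and \<beta>: "\<beta> \<ge> f1 - f0 - f2"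
  shows "\<beta> / f1 \<ge> 1 - c - \<epsilon>"
proof -
  have f1: "f1 > (1 - \<delta>) * \<mu>1" using f(1) by (simp add: algebra_simps abs_less_iff)
  moreover have "(1 - \<delta>) * \<mu>1 > 0" using \<delta> \<mu> by simp
  ultimately have f1_pos: "f1 > 0" by linarith
  have "f2 < (1 + \<delta>) * \<mu>2" using f(2) by (simp add: algebra_simps abs_less_iff)
  also have "\<dots> \<le> (1 + \<delta>) * ((c + \<delta>) * \<mu>1)" using \<mu> \<delta> by (intro mult_left_mono) auto
  finally have f2: "f2 < (1 + \<delta>) * ((c + \<delta>) * \<mu>1)" .
  have "\<delta> * (2 + 2 * c + \<delta> + \<epsilon>) \<le> \<delta> * (4 * (c + 3 + \<epsilon>))"
    using \<delta> c \<epsilon> by (intro mult_left_mono) auto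
  also have "\<dots> \<le> \<epsilon>"
    using \<delta> c \<epsilon> by (simp add: le_divide_eq mult.commute)
  finally have "\<delta> + (1 + \<delta>) * (c + \<delta>) \<le> (c + \<epsilon>) * (1 - \<delta>)" by (simp add: algebra_simps)
  then have "f0 + f2 < (c + \<epsilon>) * ((1 - \<delta>) * \<mu>1)"
    using f(3) f2 \<mu>(1) mult_right_mono[of _ _ \<mu>1] by (fastforce simp: algebra_simps)
  also have "\<dots> \<le> (c + \<epsilon>) * f1" using f1 c \<epsilon> by (intro mult_left_mono) auto
  finally have "(1 - c - \<epsilon>) * f1 \<le> \<beta>" using \<beta> by (simp add: algebra_simps)
  then show ?thesis using f1_pos by (simp add: le_divide_eq)
qed

locale sparse_random_subcomplexes =
  fixes X :: "nat \<Rightarrow> nat set set pmf" and k :: nat and c :: real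
  assumes c_pos: "c > 0"
    and support_subcomplex: "\<And>n. \<forall>Y\<in>set_pmf (X n). is_subcomplex n Y"
    and homogeneous: "\<And>n. homogeneous n (X n)"
    and spatially_independent: "\<And>n. spatially_independent n (X n)"
    and density: "filterlim (\<lambda>n. real n ^ (k + 1) * qprob (X n) k) at_top sequentially"
    and conditional_density: "(\<lambda>n. real n * rprob (X n) k) \<longlonglongrightarrow> c"
begin

lemma model: "spatially_independent_subcomplex n (X n)"
  by unfold_locales (fact support_subcomplex homogeneous spatially_independent)+

lemma face_prob_nonneg: "face_prob (X n) j \<ge> 0"
  by (simp add: face_prob_def)

lemma top_ratio: "(\<lambda>n. real n * (face_prob (X n) (k+2) / face_prob (X n) (k+1))) \<longlonglongrightarrow> c"
proof -
  have "measure_pmf.prob (X n) {Z. {0..<k+2} \<in> Z \<and> {0..<k+1} \<in> Z} = face_prob (X n) (k+2)" for n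
  proof -
    interpret spatially_independent_subcomplex n "X n" by (rule model)
    show ?thesis unfolding face_prob_def
      by (rule prob_cong) (auto intro: subcomplex_downward_closed[where \<sigma>="{0..<k+2}"])
  qed
  then show ?thesis using conditional_density by (simp add: rprob_def face_prob_def)
qed

lemma eventually_face_prob_pos:
  "eventually (\<lambda>n. k+3 \<le> n \<and> (\<forall>j\<le>k+2. face_prob (X n) j > 0)) sequentially"
proof -
  have "eventually (\<lambda>n. c/2 < real n * (face_prob (X n) (k+2) / face_prob (X n) (k+1))) sequentially"
    using top_ratio c_pos by (intro order_tendstoD(1)) auto
  then show ?thesis using eventually_ge_at_top[of "k+3"]
  proof eventually_elim
    case (elim n)
    then have "face_prob (X n) (k+2) > 0" using c_pos face_prob_nonneg[of n "k+2"]
      by (cases "face_prob (X n) (k+2) = 0") auto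
    interpret spatially_independent_subcomplex n "X n" by (rule model)
    show ?case using elim \<open>face_prob (X n) (k+2) > 0\<close> face_prob_antimono
      by (auto intro: less_le_trans)
  qed
qed

lemma eventually_admissible: "eventually (\<lambda>n. admissible_face_probs k (face_prob (X n))) sequentially"
  using eventually_face_prob_pos
proof eventually_elim
  case (elim n)
  interpret spatially_independent_subcomplex n "X n" by (rule model)
  show ?case
    unfolding admissible_face_probs_def
    using elim face_prob_log_concave face_prob_cubic_bound
    by (auto simp: face_prob_def)
qed

sublocale asymptotics: face_prob_asymptotics "\<lambda>n. face_prob (X n)" k c
  using c_pos eventually_admissible density top_ratio
  by unfold_locales (simp_all add: qprob_def face_prob_def)

abbreviation mean :: "nat \<Rightarrow> nat \<Rightarrow> real" where
  "mean n j \<equiv> nonempty_mean_faces n (X n) j"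

definition deviation_event :: "real \<Rightarrow> nat \<Rightarrow> nat \<Rightarrow> nat set set set" where
  "deviation_event \<delta> n j = {Y. {} \<in> Y \<and> \<delta> * mean n j \<le> \<bar>face_count j Y - mean n j\<bar>}"

definition many_lower_faces_event :: "real \<Rightarrow> nat \<Rightarrow> nat set set set" where
  "many_lower_faces_event \<delta> n = {Y. \<delta> * mean n (k+1) \<le> face_count k Y}"

lemma deviation_prob_vanishes:
  assumes j: "1 \<le> j" "j \<le> k+2" and \<delta>: "\<delta> > 0"
  shows "(\<lambda>n. measure_pmf.prob (X n) (deviation_event \<delta> n j) / face_prob (X n) 0) \<longlonglongrightarrow> 0"
proof (rule tendsto_sandwich[OF _ _ tendsto_const tendsto_null_sum])
  show "eventually (\<lambda>n. 0 \<le> measure_pmf.prob (X n) (deviation_event \<delta> n j) / face_prob (X n) 0) sequentially"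
    by (simp add: face_prob_nonneg)
  show "eventually (\<lambda>n. measure_pmf.prob (X n) (deviation_event \<delta> n j) / face_prob (X n) 0
      \<le> (\<Sum>i=1..j. 2^j * real n^(j-i) * face_prob (X n) 0 / (\<delta>^2 * real (n choose j) * face_prob (X n) i)))
    sequentially"
    using eventually_face_prob_pos
  proof eventually_elim
    case (elim n)
    interpret spatially_independent_subcomplex n "X n" by (rule model)
    show ?case unfolding deviation_event_def
      by (rule face_count_deviation_prob_le[OF _ _ \<delta>]) (use elim j in auto)
  qed
  show "(\<lambda>n. 2^j * real n^(j-i) * face_prob (X n) 0 / (\<delta>^2 * real (n choose j) * face_prob (X n) i))
      \<longlonglongrightarrow> 0" if "i \<in> {1..j}" for i
    using that j \<delta> eventually_mono[OF eventually_face_prob_pos]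
    by (intro deviation_bound_term_tendsto_zero[where Q="\<lambda>n. face_prob (X n)"]
        asymptotics.normalized_growth) auto
qed

lemma many_lower_faces_prob_vanishes:
  assumes \<delta>: "\<delta> > 0"
  shows "(\<lambda>n. measure_pmf.prob (X n) (many_lower_faces_event \<delta> n) / face_prob (X n) 0) \<longlonglongrightarrow> 0"
proof (rule tendsto_sandwich[OF _ _ tendsto_const])
  show "eventually (\<lambda>n. 0 \<le> measure_pmf.prob (X n) (many_lower_faces_event \<delta> n) / face_prob (X n) 0)
    sequentially" by (simp add: face_prob_nonneg)
  have "(\<lambda>n. 2 * real (k+1) / \<delta> * inverse (asymptotics.ratio n k)) \<longlonglongrightarrow> 2 * real (k+1) / \<delta> * 0"
    by (intro tendsto_mult tendsto_const tendsto_inverse_0_at_top asymptotics.ratio_growth)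
  then show "(\<lambda>n. 2 * real (k+1) / \<delta> * inverse (asymptotics.ratio n k)) \<longlonglongrightarrow> 0" by simp
  show "eventually (\<lambda>n. measure_pmf.prob (X n) (many_lower_faces_event \<delta> n) / face_prob (X n) 0
      \<le> 2 * real (k+1) / \<delta> * inverse (asymptotics.ratio n k)) sequentially"
    using eventually_face_prob_pos eventually_ge_at_top[of "2*k+1"]
  proof eventually_elim
    case (elim n)
    interpret spatially_independent_subcomplex n "X n" by (rule model)
    define q where "q = face_prob (X n)"
    have q: "q 0 > 0" "q k > 0" "q (k+1) > 0" using elim unfolding q_def by auto
    have C: "real (n choose (k+1)) > 0" using elim by simp
    have "measure_pmf.prob (X n) (many_lower_faces_event \<delta> n)
        \<le> real (n choose k) * q k / (\<delta> * mean n (k+1))"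
      unfolding many_lower_faces_event_def q_def
      by (rule markov_face_count) (use \<delta> q C in \<open>simp add: nonempty_mean_faces_def q_def\<close>)
    also have "\<dots> = real (n choose k) * q k * q 0 / (\<delta> * real (n choose (k+1)) * q (k+1))"
      using q by (simp add: nonempty_mean_faces_def q_def)
    also have "\<dots> \<le> 2 * real (Suc k) / real n * real (n choose (k+1)) * q k * q 0
        / (\<delta> * real (n choose (k+1)) * q (k+1))"
      using choose_le_choose_Suc[of k n] elim q C \<delta> by (intro divide_right_mono mult_right_mono) auto
    also have "\<dots> = 2 * real (k+1) / \<delta> * inverse (asymptotics.ratio n k) * q 0"
      using q C \<delta> by (simp add: asymptotics.ratio_def q_def field_simps)
    finally show ?case using q by (simp add: pos_divide_le_eq q_def)
  qed
qed

lemma eventually_mean_ratio_le: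
  assumes \<delta>: "\<delta> > 0"
  shows "eventually (\<lambda>n. mean n (k+2) \<le> (c / real (k+2) + \<delta>) * mean n (k+1)) sequentially"
proof -
  have "eventually (\<lambda>n. real n * (face_prob (X n) (k+2) / face_prob (X n) (k+1)) < c + \<delta> * real (k+2))
      sequentially"
    using top_ratio \<delta> by (intro order_tendstoD(2)) auto
  with eventually_face_prob_pos show ?thesis
  proof eventually_elim
    case (elim n)
    define q where "q = face_prob (X n)"
    define d where "d = real (k+2)"
    have q: "q 0 > 0" "q (k+1) > 0" "q (k+2) \<ge> 0" using elim unfolding q_def by auto
    have d: "d > 0" unfolding d_def by simp
    have "real (n choose (k+2)) \<le> real n / d * real (n choose (k+1))"
      using choose_Suc_le[of n "k+1"] by (simp add: d_def)
    then have "mean n (k+2) \<le> real n / d * real (n choose (k+1)) * q (k+2) / q 0"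
      unfolding nonempty_mean_faces_def q_def using q
      by (intro divide_right_mono mult_right_mono) (auto simp: q_def)
    also have "\<dots> = real n * (q (k+2) / q (k+1)) / d * (real (n choose (k+1)) * q (k+1) / q 0)"
      using q d by (simp add: field_simps)
    also have "\<dots> \<le> (c + \<delta> * d) / d * mean n (k+1)"
    proof -
      have "real n * (q (k+2) / q (k+1)) < c + \<delta> * d" using elim unfolding q_def d_def by simp
      moreover have "mean n (k+1) \<ge> 0" using q by (simp add: nonempty_mean_faces_def q_def)
      ultimately show ?thesis using d unfolding nonempty_mean_faces_def q_def[symmetric]
        by (intro mult_right_mono divide_right_mono) auto
    qed
    also have "(c + \<delta> * d) / d = c / real (k+2) + \<delta>"
      using d by (simp add: field_simps d_def)
    finally show ?case .
  qed
qed

lemma face_count_pos_of_not_deviation: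
  assumes "Y \<notin> deviation_event \<delta> n j" "{} \<in> Y" "\<delta> \<le> 1/2" "mean n j > 0"
  shows "face_count j Y > 0"
proof -
  have "face_count j Y > (1 - \<delta>) * mean n j"
    using assms(1,2) unfolding deviation_event_def by (auto simp: algebra_simps abs_less_iff)
  moreover have "(1 - \<delta>) * mean n j > 0" using assms(3,4) by simp
  ultimately show ?thesis by linarith
qed

lemma dim_ge_of_face_count_pos: "face_count (k+1) Y > 0 \<Longrightarrow> dim_ge Y k"
  unfolding face_count_def dim_ge_def faces_def by (force simp: card_gt_0_iff)

definition bad_ratio_event :: "real \<Rightarrow> nat set set set" where
  "bad_ratio_event \<epsilon> = {Y. real (betti k Y) / real (fnum k Y) < 1 - c / real (k+2) - \<epsilon> \<and> dim_ge Y k}"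

definition tolerance :: "real \<Rightarrow> real" where
  "tolerance \<epsilon> = min (1/2) (\<epsilon> / (4 * (c / real (k+2) + 3 + \<epsilon>)))"

lemma tolerance:
  assumes "\<epsilon> > 0"
  shows "tolerance \<epsilon> > 0" "tolerance \<epsilon> \<le> 1/2" "tolerance \<epsilon> \<le> \<epsilon> / (4 * (c / real (k+2) + 3 + \<epsilon>))"
proof -
  have "4 * (c / real (k+2) + 3 + \<epsilon>) > 0" using assms c_pos by (simp add: add_pos_pos)
  then show "tolerance \<epsilon> > 0" unfolding tolerance_def using assms by simp
  show "tolerance \<epsilon> \<le> 1/2" "tolerance \<epsilon> \<le> \<epsilon> / (4 * (c / real (k+2) + 3 + \<epsilon>))"
    unfolding tolerance_def by (rule min.cobounded1, rule min.cobounded2)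
qed

lemma bad_ratio_event_subset:
  assumes \<epsilon>: "\<epsilon> > 0" and \<delta>: "\<delta> > 0" "\<delta> \<le> 1/2" "\<delta> \<le> \<epsilon> / (4 * (c / real (k+2) + 3 + \<epsilon>))"
    and mean: "mean n (k+1) > 0" "mean n (k+2) \<ge> 0" "mean n (k+2) \<le> (c / real (k+2) + \<delta>) * mean n (k+1)"
    and Y: "Y \<in> subcomplexes n" "dim_ge Y k"
      "real (betti k Y) / real (fnum k Y) < 1 - c / real (k+2) - \<epsilon>"
  shows "Y \<in> deviation_event \<delta> n (k+1) \<union> deviation_event \<delta> n (k+2) \<union> many_lower_faces_event \<delta> n"
proof (rule ccontr)
  assume "Y \<notin> deviation_event \<delta> n (k+1) \<union> deviation_event \<delta> n (k+2) \<union> many_lower_faces_event \<delta> n"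
  moreover have "{} \<in> Y"
    using Y(2) subcomplex_downward_closed[OF Y(1)] unfolding dim_ge_def by blast
  ultimately have f: "\<bar>face_count (k+1) Y - mean n (k+1)\<bar> < \<delta> * mean n (k+1)"
      "\<bar>face_count (k+2) Y - mean n (k+2)\<bar> < \<delta> * mean n (k+2)"
      "face_count k Y < \<delta> * mean n (k+1)"
    unfolding deviation_event_def many_lower_faces_event_def by auto
  have "face_count (k+1) Y - face_count k Y - face_count (k+2) Y \<le> real (betti k Y)"
    using betti_ge_faces_diff[OF subcomplex_finite[OF Y(1)]] by (simp add: face_count_def)
  then have "1 - c / real (k+2) - \<epsilon> \<le> real (betti k Y) / face_count (k+1) Y"
    using c_pos by (intro ratio_ge_of_concentrated_counts[OF \<delta> _ \<epsilon> mean(1,3,2) f]) auto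
  moreover have "real (fnum k Y) = face_count (k+1) Y" by (simp add: fnum_def face_count_def faces_def)
  ultimately show False using Y(3) by simp
qed

lemma mean_pos: "face_prob (X n) 0 > 0 \<Longrightarrow> face_prob (X n) j > 0 \<Longrightarrow> j \<le> n \<Longrightarrow> mean n j > 0"
  by (simp add: nonempty_mean_faces_def)

lemma eventually_prob_bad_ratio_le:
  assumes \<epsilon>: "\<epsilon> > 0" and \<delta>: "\<delta> > 0" "\<delta> \<le> 1/2" "\<delta> \<le> \<epsilon> / (4 * (c / real (k+2) + 3 + \<epsilon>))"
  shows "eventually (\<lambda>n. measure_pmf.prob (X n) (bad_ratio_event \<epsilon>)
    \<le> measure_pmf.prob (X n) (deviation_event \<delta> n (k+1)) + measure_pmf.prob (X n) (deviation_event \<delta> n (k+2))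
      + measure_pmf.prob (X n) (many_lower_faces_event \<delta> n)) sequentially"
  using eventually_face_prob_pos eventually_mean_ratio_le[OF \<delta>(1)]
proof eventually_elim
  case (elim n)
  interpret spatially_independent_subcomplex n "X n" by (rule model)
  have mean: "mean n (k+1) > 0" "mean n (k+2) \<ge> 0"
    using elim mean_pos[of n "k+1"] mean_pos[of n "k+2"] by auto
  have "measure_pmf.prob (X n) (bad_ratio_event \<epsilon>)
    \<le> measure_pmf.prob (X n) (deviation_event \<delta> n (k+1) \<union> deviation_event \<delta> n (k+2)
        \<union> many_lower_faces_event \<delta> n)"
    by (rule prob_mono) (use bad_ratio_event_subset[OF \<epsilon> \<delta> mean(1,2) elim(2)] in \<open>auto simp: bad_ratio_event_def\<close>)
  also have "\<dots> \<le> measure_pmf.prob (X n) (deviation_event \<delta> n (k+1) \<union> deviation_event \<delta> n (k+2))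
      + measure_pmf.prob (X n) (many_lower_faces_event \<delta> n)"
    by (rule measure_subadditive) (auto simp: measure_pmf.emeasure_eq_measure)
  also have "\<dots> \<le> measure_pmf.prob (X n) (deviation_event \<delta> n (k+1))
      + measure_pmf.prob (X n) (deviation_event \<delta> n (k+2)) + measure_pmf.prob (X n) (many_lower_faces_event \<delta> n)"
    using measure_subadditive[of "deviation_event \<delta> n (k+1)" "X n" "deviation_event \<delta> n (k+2)"]
    by (auto simp: measure_pmf.emeasure_eq_measure)
  finally show ?case .
qed

lemma prob_dim_ge_ge:
  assumes "\<delta> \<le> 1/2" "mean n (k+1) > 0"
  shows "face_prob (X n) 0 - measure_pmf.prob (X n) (deviation_event \<delta> n (k+1))
    \<le> measure_pmf.prob (X n) {Y. dim_ge Y k}"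
proof -
  interpret spatially_independent_subcomplex n "X n" by (rule model)
  have "face_prob (X n) 0 \<le> measure_pmf.prob (X n) ({Y. dim_ge Y k} \<union> deviation_event \<delta> n (k+1))"
    unfolding face_prob_def
    by (rule prob_mono) (use face_count_pos_of_not_deviation[OF _ _ assms] dim_ge_of_face_count_pos in auto)
  also have "\<dots> \<le> measure_pmf.prob (X n) {Y. dim_ge Y k} + measure_pmf.prob (X n) (deviation_event \<delta> n (k+1))"
    by (rule measure_subadditive) (auto simp: measure_pmf.emeasure_eq_measure)
  finally show ?thesis by simp
qed

theorem bad_ratio_cond_prob_tendsto_zero:
  assumes \<epsilon>: "\<epsilon> > 0"
  shows "(\<lambda>n. measure_pmf.prob (X n) (bad_ratio_event \<epsilon>) / measure_pmf.prob (X n) {Y. dim_ge Y k})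
    \<longlonglongrightarrow> 0"
proof (rule tendsto_sandwich[OF _ _ tendsto_const])
  define \<delta> where "\<delta> = tolerance \<epsilon>"
  note \<delta> = tolerance[OF \<epsilon>, folded \<delta>_def]
  define D where "D n = measure_pmf.prob (X n) (deviation_event \<delta> n (k+1)) / face_prob (X n) 0" for n
  define E where "E n = (measure_pmf.prob (X n) (deviation_event \<delta> n (k+1))
    + measure_pmf.prob (X n) (deviation_event \<delta> n (k+2))
    + measure_pmf.prob (X n) (many_lower_faces_event \<delta> n)) / face_prob (X n) 0" for n
  have "(\<lambda>n. E n / (1 - D n)) \<longlonglongrightarrow> (0 + 0 + 0) / (1 - 0)"
    unfolding D_def E_def add_divide_distrib using \<delta>(1)
    by (intro tendsto_intros deviation_prob_vanishes many_lower_faces_prob_vanishes) auto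
  then show "(\<lambda>n. E n / (1 - D n)) \<longlonglongrightarrow> 0" by simp
  have "D \<longlonglongrightarrow> 0" unfolding D_def by (rule deviation_prob_vanishes) (use \<delta> in auto)
  then have "eventually (\<lambda>n. D n < 1/2) sequentially" by (rule order_tendstoD(2)) simp
  with eventually_prob_bad_ratio_le[OF \<epsilon> \<delta>] eventually_face_prob_pos
  show "eventually (\<lambda>n. measure_pmf.prob (X n) (bad_ratio_event \<epsilon>) / measure_pmf.prob (X n) {Y. dim_ge Y k}
      \<le> E n / (1 - D n)) sequentially"
  proof eventually_elim
    case (elim n)
    then have q: "face_prob (X n) 0 > 0" "mean n (k+1) > 0" using mean_pos[of n "k+1"] by auto
    have "face_prob (X n) 0 * (1 - D n) \<le> measure_pmf.prob (X n) {Y. dim_ge Y k}"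
      using prob_dim_ge_ge[OF \<delta>(2) q(2)] q(1) by (simp add: D_def algebra_simps)
    moreover have "face_prob (X n) 0 * (1 - D n) > 0" using q elim(3) by simp
    ultimately have "measure_pmf.prob (X n) (bad_ratio_event \<epsilon>) / measure_pmf.prob (X n) {Y. dim_ge Y k}
        \<le> (face_prob (X n) 0 * E n) / (face_prob (X n) 0 * (1 - D n))"
      using elim(1) q(1) by (intro frac_le) (auto simp: E_def)
    then show ?case using q(1) by simp
  qed
qed simp

end

theorem lemma5p5:
  fixes k :: nat and c :: real and X :: "nat \<Rightarrow> nat set set pmf"
  assumes "c > 0"
    and "\<And>n. \<forall>Y\<in>set_pmf (X n). is_subcomplex n Y"
    and "\<And>n. homogeneous n (X n)"
    and "\<And>n. spatially_independent n (X n)"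
    and "filterlim (\<lambda>n. real n ^ (k + 1) * qprob (X n) k) at_top sequentially"
    and "(\<lambda>n. real n * rprob (X n) k) \<longlonglongrightarrow> c"
  shows "\<forall>\<epsilon>>0. (\<lambda>n.
      measure_pmf.prob (X n)
        {Y. real (betti k Y) / real (fnum k Y) < 1 - c / real (k + 2) - \<epsilon> \<and> dim_ge Y k}
      / measure_pmf.prob (X n) {Y. dim_ge Y k}) \<longlonglongrightarrow> 0"
proof -
  interpret sparse_random_subcomplexes X k c
    using assms by unfold_locales
  show ?thesis using bad_ratio_cond_prob_tendsto_zero unfolding bad_ratio_event_def by blast
qed

end
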